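(* Assume the Setting and consider Algorithm 1 with $0\le\beta<1$, and $\tau>1$, $\mu_0>0$ chosen such that $1-\frac{1+\eta}{\tau}-\eta-\frac{\mu_0}{4\sigma}>0$; let $n_\delta$ denote the stopping index for data $y^\delta$. Then there exists a solution $x^*$ of $F(x)=y$ with $x^*\in B_{2\rho}(x_0)\cap\mathrm{dom}(\mathcal R)$ such that for every sequence $\delta_l\to0$, $\delta_l>0$, and every choice of data $y^{\delta_l}$ with $\|y^{\delta_l}-y\|\le\delta_l$, one has $\lim_{l\to\infty}D_{\mathcal R}^{\xi_{n_{\delta_l}}^{\delta_l}}(x^*,x_{n_{\delta_l}}^{\delta_l})=0$ and $\lim_{l\to\infty}\|x_{n_{\delta_l}}^{\delta_l}-x^*\|=0$. (Here $x^*$ is the strong limit of the exact-data iterates $x_n$ of Algorithm 2 with the same parameters.) If in addition $\mathrm{Ker}(L(x^\dagger))\subset\mathrm{Ker}(L(x))$ for all $x\in B_{2\rho}(x_0)$, then $x^*=x^\dagger$.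
   Context: Setting. Let $X,Y$ be real Hilbert spaces. Let $\mathcal R:X\to(-\infty,\infty]$ be proper, lower semicontinuous and strongly convex with constant $\sigma>0$, i.e. $\mathcal R(t\bar x+(1-t)x)+\sigma t(1-t)\|\bar x-x\|^2\le t\mathcal R(\bar x)+(1-t)\mathcal R(x)$ for all $\bar x,x\in\mathrm{dom}(\mathcal R)$ and $t\in[0,1]$. For $\xi\in\partial\mathcal R(x)$ (subdifferential) the Bregman distance is $D_{\mathcal R}^{\xi}(z,x)=\mathcal R(z)-\mathcal R(x)-\langle\xi,z-x\rangle$. The convex conjugate $\mathcal R^*$ is differentiable with $\|\nabla\mathcal R^*(\bar\xi)-\nabla\mathcal R^*(\xi)\|\le\|\bar\xi-\xi\|/(2\sigma)$, and $\nabla\mathcal R^*(\xi)=\arg\min_{x\in X}\{\mathcal R(x)-\langle\xi,x\rangle\}$ (unique minimizer), with $\xi\in\partial\mathcal R(\nabla\mathcal R^*(\xi))$. Let $F:\mathrm{dom}(F)\subset X\to Y$ and $y\in Y$. Assume: (b) there are $\rho>0$, $x_0\in X$, $\xi_0\in\partial\mathcal R(x_0)$ with $B_{2\rho}(x_0):=\{x:\|x-x_0\|\le 2\rho\}\subset\mathrm{dom}(F)$, and $F(x)=y$ has a solution $\bar x$ with $D_{\mathcal R}^{\xi_0}(\bar x,x_0)\le\sigma\rho^2$; (c) $F$ is weakly closed: if $x_n\in\mathrm{dom}(F)$, $x_n\rightharpoonup x$ and $F(x_n)\to v$, then $x\in\mathrm{dom}(F)$ and $F(x)=v$; (d) there are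 bounded linear operators $L(x):X\to Y$, $x\in B_{2\rho}(x_0)$, with $x\mapsto L(x)$ continuous on $B_{2\rho}(x_0)$, a constant $\eta\in[0,1)$ with $\|F(x)-F(\bar x)-L(\bar x)(x-\bar x)\|\le\eta\|F(x)-F(\bar x)\|$ for all $x,\bar x\in B_{2\rho}(x_0)$, and a constant $L>0$ with $\|L(x)\|\le L$ on $B_{2\rho}(x_0)$. Under these assumptions $F(x)=y$ has a unique solution $x^\dagger\in\mathrm{dom}(F)$ minimizing $D_{\mathcal R}^{\xi_0}(x,x_0)$ over all solutions; it satisfies $\|x^\dagger-x_0\|\le\rho$. Algorithm 1 (noisy data $y^\delta$ with $\|y^\delta-y\|\le\delta$, $\delta>0$). Parameters: $\tau>1$, $\beta\in[0,\infty]$, $\mu_0>0$, $\mu_1>0$, and a fixed choice of one of two step-size rules: (constant) $\alpha_n^\delta=\mu_0/L^2$, or (adaptive) $\alpha_n^\delta=\min\{\mu_0\|r_n^\delta\|^2/\|g_n^\delta\|^2,\mu_1\}$ (with $\mu_0\|r_n^\delta\|^2/\|g_n^\delta\|^2:=+\infty$ if $g_n^\delta=0$). Set $\xi_{-1}^\delta=\xi_0^\delta=\xi_0$, $x_0^\delta=x_0=\nabla\mathcal R^*(\xi_0)$. For $n\ge0$: (i) $r_n^\delta:=F(x_n^\delta)-y^\delta$; if $\|r_n^\delta\|\le\tau\delta$, stop and output $x_n^\delta$ (the stopping index is denoted $n_\delta$; it is finite under the hypotheses of the claim). (ii) $g_n^\delta:=L(x_n^\delta)^*r_n^\delta$ and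 $\alpha_n^\delta$ by the chosen rule. (iii) $m_n^\delta:=\xi_n^\delta-\xi_{n-1}^\delta$; $\tilde\gamma_0^\delta:=0$ and for $n\ge1$, $\tilde\gamma_n^\delta:=\langle m_n^\delta,x_n^\delta-x_{n-1}^\delta\rangle-(1-\eta)\alpha_{n-1}^\delta\|r_{n-1}^\delta\|^2+(1+\eta)\alpha_{n-1}^\delta\delta\|r_{n-1}^\delta\|+\beta_{n-1}^\delta\tilde\gamma_{n-1}^\delta$. (iv) $\beta_n^\delta:=\min\{\max\{0,(\alpha_n^\delta\langle g_n^\delta,m_n^\delta\rangle-2\sigma\tilde\gamma_n^\delta)/\|m_n^\delta\|^2\},\beta\}$ if $m_n^\delta\ne0$, and $\beta_n^\delta:=0$ if $m_n^\delta=0$. (v) $\xi_{n+1}^\delta:=\xi_n^\delta-\alpha_n^\delta g_n^\delta+\beta_n^\delta m_n^\delta$, $x_{n+1}^\delta:=\nabla\mathcal R^*(\xi_{n+1}^\delta)$. Algorithm 2 (exact data $y$). Same parameters $\beta,\mu_0,\mu_1$ and same step-size rule type: (constant) $\alpha_n=\mu_0/L^2$, or (adaptive) $\alpha_n=\min\{\mu_0\|r_n\|^2/\|g_n\|^2,\mu_1\}$ if $r_n\ne0$ and $\alpha_n=0$ if $r_n=0$. Set $\xi_{-1}=\xi_0$, $x_0=\nabla\mathcal R^*(\xi_0)$. For all $n\ge0$ (no stopping): $r_n:=F(x_n)-y$, $g_n:=L(x_n)^*r_n$, $\alpha_n$ by the rule; $m_n:=\xi_n-\xi_{n-1}$; $\tilde\gamma_0:=0$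 and for $n\ge1$, $\tilde\gamma_n:=\langle m_n,x_n-x_{n-1}\rangle-(1-\eta)\alpha_{n-1}\|r_{n-1}\|^2+\beta_{n-1}\tilde\gamma_{n-1}$; $\beta_n:=\min\{\max\{0,(\alpha_n\langle g_n,m_n\rangle-2\sigma\tilde\gamma_n)/\|m_n\|^2\},\beta\}$ if $m_n\ne0$ and $\beta_n:=0$ if $m_n=0$; $\xi_{n+1}:=\xi_n-\alpha_ng_n+\beta_nm_n$, $x_{n+1}:=\nabla\mathcal R^*(\xi_{n+1})$. *)

theory Defs
  imports "HOL-Analysis.Analysis"
begin

definition effdom :: "('a \<Rightarrow> ereal) \<Rightarrow> 'a set" where
  "effdom R = {x. R x < \<infinity>}"

definition proper_fun :: "('a \<Rightarrow> ereal) \<Rightarrow> bool" where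
  "proper_fun R \<longleftrightarrow> (\<exists>x. R x < \<infinity>) \<and> (\<forall>x. R x > -\<infinity>)"

definition lsc_fun :: "('a::topological_space \<Rightarrow> ereal) \<Rightarrow> bool" where
  "lsc_fun R \<longleftrightarrow> (\<forall>c. closed {x. R x \<le> c})"

definition strongly_convex :: "('a::real_normed_vector \<Rightarrow> ereal) \<Rightarrow> real \<Rightarrow> bool" where
  "strongly_convex R \<sigma> \<longleftrightarrow>
     (\<forall>xb\<in>effdom R. \<forall>x\<in>effdom R. \<forall>t::real. 0 \<le> t \<and> t \<le> 1 \<longrightarrow>
        R (t *\<^sub>R xb + (1 - t) *\<^sub>R x) + ereal (\<sigma> * t * (1 - t) * (norm (xb - x))\<^sup>2)
          \<le> ereal t * R xb + ereal (1 - t) * R x)"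

definition subdiff :: "('a::real_inner \<Rightarrow> ereal) \<Rightarrow> 'a \<Rightarrow> 'a set" where
  "subdiff R x = {\<xi>. R x < \<infinity> \<and> R x > -\<infinity> \<and>
                      (\<forall>z. R z \<ge> R x + ereal (\<xi> \<bullet> (z - x)))}"

definition bregman :: "('a::real_inner \<Rightarrow> ereal) \<Rightarrow> 'a \<Rightarrow> 'a \<Rightarrow> 'a \<Rightarrow> ereal" where
  "bregman R \<xi> z x = R z - R x - ereal (\<xi> \<bullet> (z - x))"

text \<open>Gradient of the convex conjugate: the unique minimizer of R(x) - <xi,x>.\<close>
definition gradRstar :: "('a::real_inner \<Rightarrow> ereal) \<Rightarrow> 'a \<Rightarrow> 'a" where
  "gradRstar R \<xi> = (THE x. \<forall>z. R x - ereal (\<xi> \<bullet> x) \<le> R z - ereal (\<xi> \<bullet> z))"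

definition weak_conv :: "(nat \<Rightarrow> 'a::real_inner) \<Rightarrow> 'a \<Rightarrow> bool" where
  "weak_conv xs x \<longleftrightarrow> (\<forall>z. (\<lambda>n. xs n \<bullet> z) \<longlonglongrightarrow> x \<bullet> z)"

definition xdag :: "('a::real_inner \<Rightarrow> ereal) \<Rightarrow> ('a \<Rightarrow> 'b) \<Rightarrow> 'a set \<Rightarrow> 'b \<Rightarrow> 'a \<Rightarrow> 'a \<Rightarrow> 'a" where
  "xdag R F domF y \<xi>0 x0 = (THE x. x \<in> domF \<and> F x = y \<and>
      (\<forall>z\<in>domF. F z = y \<longrightarrow> bregman R \<xi>0 x x0 \<le> bregman R \<xi>0 z x0))"

text \<open>Step size. adaptive = False: constant rule mu0/L^2. exact = True: Algorithm 2 convention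
  (alpha = 0 if r = 0); exact = False: Algorithm 1 convention (quotient = +infinity if g = 0).\<close>
definition stepsize :: "bool \<Rightarrow> bool \<Rightarrow> real \<Rightarrow> real \<Rightarrow> real \<Rightarrow> real \<Rightarrow> real \<Rightarrow> real" where
  "stepsize adaptive exact \<mu>0 \<mu>1 Lc nr ng =
     (if \<not> adaptive then \<mu>0 / Lc\<^sup>2
      else if exact \<and> nr = 0 then 0
      else if ng = 0 then \<mu>1
      else min (\<mu>0 * nr\<^sup>2 / ng\<^sup>2) \<mu>1)"

definition momentum :: "real \<Rightarrow> real \<Rightarrow> real \<Rightarrow> real \<Rightarrow> 'a::real_inner \<Rightarrow> 'a \<Rightarrow> real" where
  "momentum \<beta> \<sigma> \<alpha> \<gamma> g m =
     (if m = 0 then 0 else min (max 0 ((\<alpha> * (g \<bullet> m) - 2 * \<sigma> * \<gamma>) / (norm m)\<^sup>2)) \<beta>)"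

text \<open>State at index n is (xi_{n-1}, xi_n, gammatilde_n).
  Algorithm 1 with data yd and noise level delta: exact = False.
  Algorithm 2 with exact data y: exact = True and delta = 0 (the delta-term then vanishes).\<close>
primrec iter :: "('a::real_inner \<Rightarrow> ereal) \<Rightarrow> ('a \<Rightarrow> 'b::real_inner) \<Rightarrow> ('a \<Rightarrow> ('a \<Rightarrow>\<^sub>L 'b))
    \<Rightarrow> real \<Rightarrow> real \<Rightarrow> real \<Rightarrow> real \<Rightarrow> real \<Rightarrow> real \<Rightarrow> bool \<Rightarrow> bool \<Rightarrow> 'a
    \<Rightarrow> real \<Rightarrow> 'b \<Rightarrow> nat \<Rightarrow> 'a \<times> 'a \<times> real" where
  "iter R F L Lc \<eta> \<sigma> \<beta> \<mu>0 \<mu>1 adaptive exact \<xi>0 \<delta> yd 0 = (\<xi>0, \<xi>0, 0)"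
| "iter R F L Lc \<eta> \<sigma> \<beta> \<mu>0 \<mu>1 adaptive exact \<xi>0 \<delta> yd (Suc n) =
    (case iter R F L Lc \<eta> \<sigma> \<beta> \<mu>0 \<mu>1 adaptive exact \<xi>0 \<delta> yd n of (\<xi>p, \<xi>, \<gamma>) \<Rightarrow>
      let x = gradRstar R \<xi>;
          r = F x - yd;
          g = adjoint (blinfun_apply (L x)) r;
          \<alpha> = stepsize adaptive exact \<mu>0 \<mu>1 Lc (norm r) (norm g);
          m = \<xi> - \<xi>p;
          b = momentum \<beta> \<sigma> \<alpha> \<gamma> g m;
          \<xi>n = \<xi> - \<alpha> *\<^sub>R g + b *\<^sub>R m;
          xn = gradRstar R \<xi>n
      in (\<xi>, \<xi>n, (\<xi>n - \<xi>) \<bullet> (xn - x) - (1 - \<eta>) * \<alpha> * (norm r)\<^sup>2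
                     + (1 + \<eta>) * \<alpha> * \<delta> * norm r + b * \<gamma>))"

definition iter_xi where
  "iter_xi R F L Lc \<eta> \<sigma> \<beta> \<mu>0 \<mu>1 adaptive exact \<xi>0 \<delta> yd n =
     fst (snd (iter R F L Lc \<eta> \<sigma> \<beta> \<mu>0 \<mu>1 adaptive exact \<xi>0 \<delta> yd n))"

definition iter_x where
  "iter_x R F L Lc \<eta> \<sigma> \<beta> \<mu>0 \<mu>1 adaptive exact \<xi>0 \<delta> yd n =
     gradRstar R (iter_xi R F L Lc \<eta> \<sigma> \<beta> \<mu>0 \<mu>1 adaptive exact \<xi>0 \<delta> yd n)"

definition stop_index where
  "stop_index R F L Lc \<eta> \<sigma> \<beta> \<mu>0 \<mu>1 adaptive \<xi>0 \<tau> \<delta> yd =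
     (LEAST n. norm (F (iter_x R F L Lc \<eta> \<sigma> \<beta> \<mu>0 \<mu>1 adaptive False \<xi>0 \<delta> yd n) - yd) \<le> \<tau> * \<delta>)"

end

theory Submission
  imports Defs
begin

text \<open>
  For every solution \<open>xh\<close> near \<open>x0\<close>, the choice of \<open>\<beta>\<^sub>n\<close> maintains the invariant
  \<open>\<langle>m\<^sub>n, x\<^sub>n - xh\<rangle> \<le> \<gamma>\<^sub>n\<close>, and with it the Bregman distance \<open>D\<^bsub>\<xi>\<^sub>n\<^esub>(xh, x\<^sub>n)\<close> drops by
  \<open>c\<^sub>0 \<alpha>\<^sub>n \<parallel>r\<^sub>n\<parallel>\<^sup>2\<close> in every step in which the residual dominates the noise.
  For exact data this makes \<open>\<Sum> \<alpha>\<^sub>n \<parallel>r\<^sub>n\<parallel>\<^sup>2\<close> finite, so \<open>r\<^sub>n \<rightarrow> 0\<close> and \<open>m\<^sub>n \<rightarrow> 0\<close>; comparing two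
  iterates through the iterate of smallest residual between them shows that \<open>(x\<^sub>n)\<close> is Cauchy,
  and lower semicontinuity gives \<open>D\<^bsub>\<xi>\<^sub>n\<^esub>(x\<^sup>*, x\<^sub>n) \<rightarrow> 0\<close> for its limit \<open>x\<^sup>*\<close>, a solution.
  For noisy data, each fixed iterate depends continuously on the data, so up to a fixed index the
  noisy iterates approach the exact ones, and beyond it the noisy Bregman distances to \<open>x\<^sup>*\<close> keep
  decreasing until the discrepancy principle stops.
  Under the kernel condition \<open>\<xi>\<^sub>n - \<xi>\<^sub>0\<close> stays orthogonal to \<open>x\<^sup>* - x\<^sup>\<dagger>\<close>, which makes \<open>x\<^sup>*\<close> a solution
  of minimal Bregman distance to \<open>x0\<close>, i.e. \<open>x\<^sup>* = x\<^sup>\<dagger>\<close>.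
\<close>

section \<open>Minimizing sequences, the Riesz representation and adjoints\<close>

lemma minimizing_sequence_exists:
  fixes \<phi> :: "'a \<Rightarrow> real"
  assumes "S \<noteq> {}" and "bdd_below (\<phi> ` S)"
  obtains zs where "\<And>k. zs k \<in> S" and "(\<lambda>k. \<phi> (zs k)) \<longlonglongrightarrow> Inf (\<phi> ` S)"
proof -
  define m where "m = Inf (\<phi> ` S)"
  have "\<exists>z\<in>S. \<phi> z < m + inverse (real (Suc k))" for k
  proof -
    have "Inf (\<phi> ` S) < m + inverse (real (Suc k))" unfolding m_def by simp
    from cInf_lessD[OF _ this] show ?thesis using assms(1) by blast
  qed
  then obtain zs where zs: "\<And>k. zs k \<in> S" and lt: "\<And>k. \<phi> (zs k) < m + inverse (real (Suc k))"
    by metis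
  have upper: "(\<lambda>k. m + inverse (real (Suc k))) \<longlonglongrightarrow> m"
    using tendsto_add[OF tendsto_const LIMSEQ_inverse_real_of_nat, of m] by simp
  have "\<forall>\<^sub>F k in sequentially. m \<le> \<phi> (zs k)"
    using cInf_lower[OF imageI[OF zs] assms(2)] unfolding m_def by simp
  moreover have "\<forall>\<^sub>F k in sequentially. \<phi> (zs k) \<le> m + inverse (real (Suc k))"
    using lt by (simp add: less_imp_le)
  ultimately have "(\<lambda>k. \<phi> (zs k)) \<longlonglongrightarrow> m"
    by (rule tendsto_sandwich[OF _ _ tendsto_const upper])
  with zs show thesis unfolding m_def using that by blast
qed

lemma minimizing_sequence_Cauchy:
  fixes \<phi> :: "'a::real_normed_vector \<Rightarrow> real"
  assumes "convex S" and c: "c > 0"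
    and mid: "\<And>a b. a \<in> S \<Longrightarrow> b \<in> S \<Longrightarrow> \<phi> (midpoint a b) + c * (norm (a - b))\<^sup>2 \<le> (\<phi> a + \<phi> b) / 2"
    and lower: "\<And>z. z \<in> S \<Longrightarrow> m \<le> \<phi> z"
    and zs: "\<And>k. zs k \<in> S" and lim: "(\<lambda>k. \<phi> (zs k)) \<longlonglongrightarrow> m"
  shows "Cauchy zs"
proof (rule metric_CauchyI)
  fix e :: real assume e: "e > 0"
  then obtain N where N: "\<And>k. k \<ge> N \<Longrightarrow> \<phi> (zs k) < m + c * e\<^sup>2"
    using order_tendstoD(2)[OF lim, of "m + c * e\<^sup>2"] c by (auto simp: eventually_sequentially)
  have "dist (zs j) (zs k) < e" if "j \<ge> N" "k \<ge> N" for j k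
  proof -
    have "midpoint (zs j) (zs k) \<in> S"
      using \<open>convex S\<close> zs by (meson convex_contains_segment midpoint_in_closed_segment subsetD)
    then have "m \<le> \<phi> (midpoint (zs j) (zs k))" by (rule lower)
    moreover have "\<phi> (zs j) < m + c * e\<^sup>2" "\<phi> (zs k) < m + c * e\<^sup>2" using N that by auto
    ultimately have "c * (norm (zs j - zs k))\<^sup>2 < c * e\<^sup>2"
      using mid[OF zs zs, of j k] by argo
    then have "(norm (zs j - zs k))\<^sup>2 < e\<^sup>2" using c by simp
    then show ?thesis using e by (simp add: dist_norm power_less_imp_less_base)
  qed
  then show "\<exists>M. \<forall>j\<ge>M. \<forall>k\<ge>M. dist (zs j) (zs k) < e" by blast
qed

lemma minimizing_sequence_converges:
  fixes \<phi> :: "'a::{real_normed_vector,complete_space} \<Rightarrow> real"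
  assumes "convex S" "S \<noteq> {}" "bdd_below (\<phi> ` S)" "c > 0"
    and "\<And>a b. a \<in> S \<Longrightarrow> b \<in> S \<Longrightarrow> \<phi> (midpoint a b) + c * (norm (a - b))\<^sup>2 \<le> (\<phi> a + \<phi> b) / 2"
  obtains zs z where "\<And>k. zs k \<in> S" "zs \<longlonglongrightarrow> z" "(\<lambda>k. \<phi> (zs k)) \<longlonglongrightarrow> Inf (\<phi> ` S)"
proof -
  obtain zs where zs: "\<And>k. zs k \<in> S" "(\<lambda>k. \<phi> (zs k)) \<longlonglongrightarrow> Inf (\<phi> ` S)"
    using minimizing_sequence_exists[OF assms(2,3)] by blast
  have "Cauchy zs"
    using minimizing_sequence_Cauchy[OF assms(1,4,5) cInf_lower[OF imageI assms(3)] zs] by blast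
  then obtain z where "zs \<longlonglongrightarrow> z"
    unfolding Cauchy_convergent_iff convergent_def by blast
  then show thesis using that zs by blast
qed

lemma norm_midpoint_sq:
  fixes a b :: "'a::real_inner"
  shows "(norm (midpoint a b))\<^sup>2 = ((norm a)\<^sup>2 + (norm b)\<^sup>2) / 2 - (norm (a - b))\<^sup>2 / 4"
  unfolding midpoint_def power2_norm_eq_inner
  by (simp add: inner_add_left inner_add_right inner_diff_left inner_diff_right inner_commute
      field_simps)

text \<open>Riesz representation, via the minimizer of \<open>\<parallel>x\<parallel>\<^sup>2 - 2 f x\<close>.\<close>

lemma minimizer_represents_functional:
  fixes f :: "'a::real_inner \<Rightarrow> real"
  assumes "linear f" and min: "\<And>z. (norm w)\<^sup>2 - 2 * f w \<le> (norm z)\<^sup>2 - 2 * f z"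
  shows "f v = w \<bullet> v"
proof (rule ccontr)
  assume "f v \<noteq> w \<bullet> v"
  define c where "c = w \<bullet> v - f v"
  define s where "s = (norm v)\<^sup>2 + 1"
  have "c \<noteq> 0" "s > 0" unfolding c_def s_def using \<open>f v \<noteq> w \<bullet> v\<close> by (auto intro: add_nonneg_pos)
  define t where "t = - c / s"
  have "f (w + t *\<^sub>R v) = f w + t * f v"
    using assms(1) by (simp add: linear_add linear_scale)
  moreover have "(norm (w + t *\<^sub>R v))\<^sup>2 = (norm w)\<^sup>2 + 2 * t * (w \<bullet> v) + t\<^sup>2 * (norm v)\<^sup>2"
    unfolding power2_norm_eq_inner
    by (simp add: inner_add_left inner_add_right inner_commute algebra_simps power2_eq_square)
  ultimately have J: "(norm (w + t *\<^sub>R v))\<^sup>2 - 2 * f (w + t *\<^sub>R v)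
      = (norm w)\<^sup>2 - 2 * f w + (2 * t * c + t\<^sup>2 * (norm v)\<^sup>2)"
    unfolding c_def by (simp add: algebra_simps)
  have "2 * t * c + t\<^sup>2 * (norm v)\<^sup>2 = c\<^sup>2 * ((norm v)\<^sup>2 - 2 * s) / s\<^sup>2"
    unfolding t_def using \<open>s > 0\<close> by (simp add: field_simps power2_eq_square)
  also have "\<dots> < 0"
    using \<open>c \<noteq> 0\<close> \<open>s > 0\<close> unfolding s_def by (simp add: divide_neg_pos mult_pos_neg)
  finally show False using J min[of "w + t *\<^sub>R v"] by linarith
qed

lemma riesz_representation:
  fixes f :: "'a::{real_inner,complete_space} \<Rightarrow> real"
  assumes bl: "bounded_linear f"
  shows "\<exists>w. \<forall>v. f v = w \<bullet> v"
proof -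
  obtain K where K: "\<And>x. norm (f x) \<le> norm x * K"
    using bounded_linear.bounded[OF bl] by blast
  define J where "J x = (norm x)\<^sup>2 - 2 * f x" for x
  have "- K\<^sup>2 \<le> J x" for x
    using K[of x] sum_power2_ge_zero[of "norm x - K" 0] unfolding J_def
    by (simp add: power2_eq_square algebra_simps abs_le_iff)
  then have bdd: "bdd_below (range J)" by (meson bdd_belowI2)
  have mid: "J (midpoint a b) + 1/4 * (norm (a - b))\<^sup>2 \<le> (J a + J b) / 2" for a b
  proof -
    have "f (midpoint a b) = (f a + f b) / 2"
      using bounded_linear.linear[OF bl] by (simp add: midpoint_def linear_add linear_scale)
    then show ?thesis unfolding J_def norm_midpoint_sq by (simp add: field_simps)
  qed
  obtain zs w where w: "zs \<longlonglongrightarrow> w" "(\<lambda>k. J (zs k)) \<longlonglongrightarrow> Inf (range J)"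
    using minimizing_sequence_converges[of UNIV J "1/4"] bdd mid by auto
  have "(\<lambda>k. J (zs k)) \<longlonglongrightarrow> J w"
    unfolding J_def by (intro tendsto_intros w bounded_linear.tendsto[OF bl])
  then have "J w = Inf (range J)" using w(2) LIMSEQ_unique by blast
  then have "J w \<le> J z" for z using bdd by (simp add: cInf_lower)
  then show ?thesis
    using minimizer_represents_functional[OF bounded_linear.linear[OF bl]] unfolding J_def by blast
qed

lemma adjoint_exists:
  fixes A :: "'a::{real_inner,complete_space} \<Rightarrow>\<^sub>L 'b::real_inner"
  shows "\<exists>A'. \<forall>x y. A x \<bullet> y = x \<bullet> A' y"
proof -
  have "\<exists>w. \<forall>x. A x \<bullet> y = w \<bullet> x" for y
    using riesz_representation[of "\<lambda>x. A x \<bullet> y"]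
      bounded_linear_compose[OF bounded_linear_inner_left blinfun.bounded_linear_right] by blast
  then obtain g where "\<forall>y x. A x \<bullet> y = g y \<bullet> x" by metis
  then show ?thesis by (metis inner_commute)
qed

lemma inner_adjoint_blinfun:
  fixes A :: "'a::{real_inner,complete_space} \<Rightarrow>\<^sub>L 'b::real_inner"
  shows "A x \<bullet> y = x \<bullet> adjoint (blinfun_apply A) y"
  using someI_ex[OF adjoint_exists[of A]] unfolding adjoint_def by blast

lemma norm_adjoint_blinfun_diff_le:
  fixes A B :: "'a::{real_inner,complete_space} \<Rightarrow>\<^sub>L 'b::real_inner"
  shows "norm (adjoint (blinfun_apply A) y - adjoint (blinfun_apply B) y')
    \<le> norm (A - B) * norm y + norm B * norm (y - y')"
proof -
  define u where "u = adjoint (blinfun_apply A) y - adjoint (blinfun_apply B) y'"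
  have "(norm u)\<^sup>2 = u \<bullet> adjoint (blinfun_apply A) y - u \<bullet> adjoint (blinfun_apply B) y'"
    unfolding power2_norm_eq_inner by (subst (2) u_def) (simp add: inner_diff_right)
  also have "\<dots> = A u \<bullet> y - B u \<bullet> y'" by (simp add: inner_adjoint_blinfun)
  also have "\<dots> = (A - B) u \<bullet> y + B u \<bullet> (y - y')"
    by (simp add: blinfun.diff_left inner_diff_left inner_diff_right)
  also have "\<dots> \<le> norm ((A - B) u) * norm y + norm (B u) * norm (y - y')"
    using norm_cauchy_schwarz add_mono by blast
  also have "\<dots> \<le> (norm (A - B) * norm u) * norm y + (norm B * norm u) * norm (y - y')"
    by (intro add_mono mult_right_mono norm_blinfun) auto
  finally have "norm u * norm u \<le> norm u * (norm (A - B) * norm y + norm B * norm (y - y'))"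
    by (simp add: power2_eq_square algebra_simps)
  then show ?thesis
    unfolding u_def[symmetric] by (cases "norm u = 0") (auto intro: order_trans[OF _ norm_ge_zero])
qed

lemma norm_adjoint_blinfun_le:
  fixes A :: "'a::{real_inner,complete_space} \<Rightarrow>\<^sub>L 'b::real_inner"
  shows "norm (adjoint (blinfun_apply A) y) \<le> norm A * norm y"
proof -
  have "adjoint (blinfun_apply (0::'a \<Rightarrow>\<^sub>L 'b)) 0 = 0"
    using inner_adjoint_blinfun[of "0::'a \<Rightarrow>\<^sub>L 'b" "adjoint (blinfun_apply (0::'a \<Rightarrow>\<^sub>L 'b)) 0" 0]
    by simp
  then show ?thesis using norm_adjoint_blinfun_diff_le[of A y 0 0] by simp
qed

section \<open>Limits of real sequences\<close>

lemma tendsto_bounded_scaleR_zero: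
  fixes f :: "'b \<Rightarrow> 'a::real_normed_vector"
  assumes "\<And>l. \<bar>c l\<bar> \<le> K" and "(f \<longlongrightarrow> 0) F"
  shows "((\<lambda>l. c l *\<^sub>R f l) \<longlongrightarrow> 0) F"
proof -
  have "Bfun c F" using assms(1) by (intro BfunI[where K = K] always_eventually allI) simp
  moreover have "Zfun f F" using assms(2) by (simp add: tendsto_Zfun_iff)
  ultimately have "Zfun (\<lambda>l. c l *\<^sub>R f l) F"
    by (rule bounded_bilinear.Bfun_prod_Zfun[OF bounded_bilinear_scaleR])
  then show ?thesis by (simp add: tendsto_Zfun_iff)
qed

lemma linear_recursion_tendsto_zero:
  fixes e t :: "nat \<Rightarrow> real"
  assumes e0: "\<And>n. 0 \<le> e n" and rec: "\<And>n. e (Suc n) \<le> q * e n + t n"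
    and t: "t \<longlonglongrightarrow> 0" and q: "0 \<le> q" "q < 1"
  shows "e \<longlonglongrightarrow> 0"
proof (rule LIMSEQ_I)
  fix \<epsilon> :: real assume \<epsilon>: "\<epsilon> > 0"
  then obtain N where N: "\<And>n. n \<ge> N \<Longrightarrow> \<bar>t n\<bar> < \<epsilon> * (1 - q) / 2"
    using LIMSEQ_D[OF t, of "\<epsilon> * (1 - q) / 2"] q by fastforce
  have bnd: "e (N + j) \<le> q ^ j * e N + \<epsilon> / 2" for j
  proof (induction j)
    case (Suc j)
    have "e (N + Suc j) \<le> q * (q ^ j * e N + \<epsilon> / 2) + \<epsilon> * (1 - q) / 2"
      using rec[of "N + j"] mult_left_mono[OF Suc.IH q(1)] N[of "N + j"] by auto
    also have "\<dots> = q ^ Suc j * e N + \<epsilon> / 2" by (simp add: field_simps)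
    finally show ?case .
  qed (use \<epsilon> in simp)
  have "(\<lambda>j. q ^ j * e N) \<longlonglongrightarrow> 0"
    using tendsto_mult[OF LIMSEQ_power_zero[of q] tendsto_const[of "e N"]] q by simp
  then obtain J where J: "\<And>j. j \<ge> J \<Longrightarrow> \<bar>q ^ j * e N\<bar> < \<epsilon> / 2"
    using LIMSEQ_D[of "\<lambda>j. q ^ j * e N" 0 "\<epsilon> / 2"] \<epsilon> by fastforce
  have "norm (e n) < \<epsilon>" if "n \<ge> N + J" for n
  proof -
    have "e n \<le> q ^ (n - N) * e N + \<epsilon> / 2" using bnd[of "n - N"] that by simp
    moreover have "\<bar>q ^ (n - N) * e N\<bar> < \<epsilon> / 2" using J[of "n - N"] that by simp
    ultimately show ?thesis using e0[of n] by simp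
  qed
  then show "\<exists>no. \<forall>n\<ge>no. norm (e n - 0) < \<epsilon>" by auto
qed

lemma damped_recursion_sum_le:
  fixes A M :: "nat \<Rightarrow> real"
  assumes "\<And>k. M (Suc k) \<le> A k + \<beta> * M k"
  shows "(1 - \<beta>) * (\<Sum>k = n..<n + j. M (Suc k)) + \<beta> * M (n + j) \<le> (\<Sum>k = n..<n + j. A k) + \<beta> * M n"
proof (induction j)
  case (Suc j)
  have "(1 - \<beta>) * (\<Sum>k = n..<n + Suc j. M (Suc k)) + \<beta> * M (n + Suc j)
      = (1 - \<beta>) * (\<Sum>k = n..<n + j. M (Suc k)) + M (Suc (n + j))"
    by (simp add: algebra_simps)
  also have "\<dots> \<le> (\<Sum>k = n..<n + j. A k) + \<beta> * M n + A (n + j)"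
    using assms[of "n + j"] Suc.IH by simp
  finally show ?case by simp
qed simp

section \<open>Strongly convex functionals and Bregman distances\<close>

locale strongly_convex_setting =
  fixes R :: "'a::{real_inner,complete_space} \<Rightarrow> ereal" and \<sigma> :: real and x0 \<xi>0 :: 'a
  assumes R_proper: "proper_fun R" and R_lsc: "lsc_fun R"
    and sigma_pos: "\<sigma> > 0" and R_sc: "strongly_convex R \<sigma>"
    and xi0: "\<xi>0 \<in> subdiff R x0"
begin

definition Rreal :: "'a \<Rightarrow> real" where "Rreal x = real_of_ereal (R x)"

lemma R_eq_Rreal: "x \<in> effdom R \<Longrightarrow> R x = ereal (Rreal x)"
  using R_proper unfolding proper_fun_def effdom_def Rreal_def by (cases "R x") auto

lemma R_notin_effdom: "x \<notin> effdom R \<Longrightarrow> R x = \<infinity>"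
  unfolding effdom_def by auto

lemma effdom_nonempty: "effdom R \<noteq> {}"
  using R_proper unfolding proper_fun_def effdom_def by auto

lemma strongly_convex_Rreal:
  assumes "a \<in> effdom R" "b \<in> effdom R" "0 \<le> t" "t \<le> 1"
  shows "t *\<^sub>R a + (1 - t) *\<^sub>R b \<in> effdom R"
    and "Rreal (t *\<^sub>R a + (1 - t) *\<^sub>R b) + \<sigma> * t * (1 - t) * (norm (a - b))\<^sup>2
      \<le> t * Rreal a + (1 - t) * Rreal b"
proof -
  let ?w = "t *\<^sub>R a + (1 - t) *\<^sub>R b"
  have "R ?w + ereal (\<sigma> * t * (1 - t) * (norm (a - b))\<^sup>2) \<le> ereal t * R a + ereal (1 - t) * R b"
    using R_sc assms unfolding strongly_convex_def by blast
  also have "\<dots> = ereal (t * Rreal a + (1 - t) * Rreal b)"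
    using R_eq_Rreal[OF assms(1)] R_eq_Rreal[OF assms(2)] by simp
  finally have "R ?w + ereal (\<sigma> * t * (1 - t) * (norm (a - b))\<^sup>2) \<le> ereal (t * Rreal a + (1 - t) * Rreal b)" .
  moreover from this show w: "?w \<in> effdom R"
    using R_notin_effdom by force
  ultimately show "Rreal ?w + \<sigma> * t * (1 - t) * (norm (a - b))\<^sup>2 \<le> t * Rreal a + (1 - t) * Rreal b"
    using R_eq_Rreal[OF w] by simp
qed

lemma convex_effdom: "convex (effdom R)"
proof (rule convexI)
  fix a b :: 'a and u v :: real
  assume "a \<in> effdom R" "b \<in> effdom R" "0 \<le> u" "0 \<le> v" "u + v = 1"
  moreover from this have "v = 1 - u" by simp
  ultimately show "u *\<^sub>R a + v *\<^sub>R b \<in> effdom R"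
    using strongly_convex_Rreal(1)[of a b u] by simp
qed

lemma subdiff_iff:
  "\<xi> \<in> subdiff R x \<longleftrightarrow> x \<in> effdom R \<and> (\<forall>z\<in>effdom R. Rreal x + \<xi> \<bullet> (z - x) \<le> Rreal z)"
proof (cases "x \<in> effdom R")
  case True
  have "R x + ereal (\<xi> \<bullet> (z - x)) \<le> R z \<longleftrightarrow> (z \<in> effdom R \<longrightarrow> Rreal x + \<xi> \<bullet> (z - x) \<le> Rreal z)" for z
    using R_eq_Rreal[OF True] R_eq_Rreal[of z] R_notin_effdom[of z] by (cases "z \<in> effdom R") auto
  then show ?thesis using True R_eq_Rreal[OF True] unfolding subdiff_def by auto
qed (auto simp: subdiff_def effdom_def)

text \<open>Strong convexity upgrades the subgradient inequality by the quadratic term: test it at the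
  points \<open>x + t (z - x)\<close> and let \<open>t \<rightarrow> 0\<close>.\<close>

lemma subgradient_ineq_strong:
  assumes "\<xi> \<in> subdiff R x" "z \<in> effdom R"
  shows "Rreal x + \<xi> \<bullet> (z - x) + \<sigma> * (norm (z - x))\<^sup>2 \<le> Rreal z"
proof (rule ccontr)
  define d where "d = (norm (z - x))\<^sup>2"
  define G where "G = Rreal x + \<xi> \<bullet> (z - x) + \<sigma> * d - Rreal z"
  assume "\<not> ?thesis"
  then have G: "G > 0" unfolding G_def d_def by simp
  have x: "x \<in> effdom R" and sub: "\<And>w. w \<in> effdom R \<Longrightarrow> Rreal x + \<xi> \<bullet> (w - x) \<le> Rreal w"
    using assms(1) subdiff_iff by auto
  have den: "2 * \<sigma> * d + 1 > 0" using sigma_pos unfolding d_def by (simp add: add_nonneg_pos)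
  define t where "t = min 1 (G / (2 * \<sigma> * d + 1))"
  have t: "0 < t" "t \<le> 1" unfolding t_def using G den by auto
  have "t \<le> G / (2 * \<sigma> * d + 1)" unfolding t_def by simp
  then have "t * (2 * \<sigma> * d + 1) \<le> G" using den by (simp add: pos_le_divide_eq)
  moreover have "0 \<le> \<sigma> * t * d" using t sigma_pos unfolding d_def by simp
  ultimately have small: "\<sigma> * t * d < G" using t by (simp add: algebra_simps)
  let ?w = "t *\<^sub>R z + (1 - t) *\<^sub>R x"
  have "?w \<in> effdom R" using strongly_convex_Rreal(1)[OF assms(2) x] t by simp
  from sub[OF this] have "Rreal x + \<xi> \<bullet> (?w - x) \<le> Rreal ?w" .
  moreover have "?w - x = t *\<^sub>R (z - x)" by (simp add: algebra_simps)
  ultimately have "Rreal x + t * (\<xi> \<bullet> (z - x)) \<le> Rreal ?w" by simp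
  with strongly_convex_Rreal(2)[OF assms(2) x, of t] t
  have "t * (\<xi> \<bullet> (z - x) + \<sigma> * (1 - t) * d) \<le> t * (Rreal z - Rreal x)"
    unfolding d_def by (simp add: algebra_simps)
  then have "\<xi> \<bullet> (z - x) + \<sigma> * (1 - t) * d \<le> Rreal z - Rreal x" using t by simp
  then show False using small unfolding G_def by (simp add: algebra_simps)
qed

definition tilt :: "'a \<Rightarrow> 'a \<Rightarrow> real" where "tilt \<xi> x = Rreal x - \<xi> \<bullet> x"

lemma tilt_lower_bound:
  assumes "z \<in> effdom R"
  shows "Rreal x0 - \<xi> \<bullet> x0 - (norm (\<xi>0 - \<xi>))\<^sup>2 / (4 * \<sigma>) \<le> tilt \<xi> z"
proof -
  let ?a = "norm (\<xi>0 - \<xi>)" and ?b = "norm (z - x0)"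
  have "- ?a * ?b \<le> (\<xi>0 - \<xi>) \<bullet> (z - x0)"
    using Cauchy_Schwarz_ineq2[of "\<xi>0 - \<xi>" "z - x0"] by linarith
  moreover have "- ?a\<^sup>2 / (4 * \<sigma>) \<le> - ?a * ?b + \<sigma> * ?b\<^sup>2"
    using sigma_pos sum_power2_ge_zero[of "2 * \<sigma> * ?b - ?a" 0]
    by (simp add: field_simps power2_eq_square)
  moreover have "Rreal x0 + \<xi>0 \<bullet> (z - x0) + \<sigma> * ?b\<^sup>2 \<le> Rreal z"
    using subgradient_ineq_strong[OF xi0 assms] .
  ultimately show ?thesis
    unfolding tilt_def by (simp add: inner_diff_left inner_diff_right algebra_simps)
qed

lemma tilt_midpoint:
  assumes "a \<in> effdom R" "b \<in> effdom R"
  shows "tilt \<xi> (midpoint a b) + \<sigma> / 4 * (norm (a - b))\<^sup>2 \<le> (tilt \<xi> a + tilt \<xi> b) / 2"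
proof -
  have "midpoint a b = (1/2) *\<^sub>R a + (1 - 1/2) *\<^sub>R b"
    unfolding midpoint_def by (simp add: scaleR_add_right)
  then have "Rreal (midpoint a b) + \<sigma> / 4 * (norm (a - b))\<^sup>2 \<le> Rreal a / 2 + Rreal b / 2"
    using strongly_convex_Rreal(2)[OF assms, of "1/2"] by simp
  moreover have "\<xi> \<bullet> midpoint a b = \<xi> \<bullet> a / 2 + \<xi> \<bullet> b / 2"
    unfolding midpoint_def by (simp add: inner_add_right)
  ultimately show ?thesis unfolding tilt_def by argo
qed

lemma lsc_limit_le:
  assumes lim: "xs \<longlonglongrightarrow> z" and dom: "\<And>k. xs k \<in> effdom R"
    and le: "\<And>k. Rreal (xs k) \<le> c k" and c: "c \<longlonglongrightarrow> c0"
  shows "z \<in> effdom R" and "Rreal z \<le> c0"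
proof -
  have lsc: "R z \<le> ereal (c0 + e)" if "e > 0" for e
  proof -
    have "\<forall>\<^sub>F k in sequentially. c k < c0 + e"
      using order_tendstoD(2)[OF c, of "c0 + e"] that by simp
    then have "\<forall>\<^sub>F k in sequentially. xs k \<in> {x. R x \<le> ereal (c0 + e)}"
    proof eventually_elim
      case (elim k)
      then show ?case using le[of k] R_eq_Rreal[OF dom] by simp
    qed
    from Lim_in_closed_set[OF _ this _ lim] show ?thesis
      using R_lsc unfolding lsc_fun_def by simp
  qed
  show z: "z \<in> effdom R"
  proof (rule ccontr)
    assume "z \<notin> effdom R"
    then show False using lsc[of 1] R_notin_effdom by simp
  qed
  show "Rreal z \<le> c0"
  proof (rule field_le_epsilon)
    fix e :: real assume "0 < e"
    then show "Rreal z \<le> c0 + e" using lsc R_eq_Rreal[OF z] by simp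
  qed
qed

lemma tilt_attains_min:
  assumes "closed C" "convex C" and ne: "C \<inter> effdom R \<noteq> {}"
  obtains x where "x \<in> C \<inter> effdom R" and "\<And>z. z \<in> C \<inter> effdom R \<Longrightarrow> tilt \<xi> x \<le> tilt \<xi> z"
proof -
  define S where "S = C \<inter> effdom R"
  define m where "m = Inf (tilt \<xi> ` S)"
  have bdd: "bdd_below (tilt \<xi> ` S)"
    unfolding S_def using tilt_lower_bound by (meson IntD2 bdd_belowI2)
  have mid: "tilt \<xi> (midpoint a b) + \<sigma> / 4 * (norm (a - b))\<^sup>2 \<le> (tilt \<xi> a + tilt \<xi> b) / 2"
    if "a \<in> S" "b \<in> S" for a b
    using tilt_midpoint that unfolding S_def by blast
  have "convex S" "S \<noteq> {}" "\<sigma> / 4 > 0"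
    unfolding S_def using convex_Int[OF assms(2) convex_effdom] ne sigma_pos by auto
  then obtain zs z where zs: "\<And>k. zs k \<in> S" "zs \<longlonglongrightarrow> z" "(\<lambda>k. tilt \<xi> (zs k)) \<longlonglongrightarrow> m"
    using minimizing_sequence_converges[of S "tilt \<xi>" "\<sigma> / 4"] bdd mid unfolding m_def by blast
  have "(\<lambda>k. tilt \<xi> (zs k) + \<xi> \<bullet> zs k) \<longlonglongrightarrow> m + \<xi> \<bullet> z"
    by (intro tendsto_intros zs)
  then have lim: "(\<lambda>k. Rreal (zs k)) \<longlonglongrightarrow> m + \<xi> \<bullet> z" unfolding tilt_def by simp
  have "\<And>k. zs k \<in> effdom R" using zs(1) unfolding S_def by blast
  from lsc_limit_le[OF zs(2) this order_refl lim]
  have "z \<in> effdom R" "tilt \<xi> z \<le> m" unfolding tilt_def by auto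
  moreover have "z \<in> C" using closed_sequentially[OF assms(1)] zs(1,2) unfolding S_def by blast
  moreover have "m \<le> tilt \<xi> w" if "w \<in> S" for w
    unfolding m_def using bdd that by (simp add: cInf_lower)
  ultimately show thesis using that unfolding S_def by (meson IntI order_trans)
qed

lemma tilt_min_unique:
  assumes "convex C" and a: "a \<in> C \<inter> effdom R" and b: "b \<in> C \<inter> effdom R"
    and a_min: "\<And>z. z \<in> C \<inter> effdom R \<Longrightarrow> tilt \<xi> a \<le> tilt \<xi> z"
    and b_min: "\<And>z. z \<in> C \<inter> effdom R \<Longrightarrow> tilt \<xi> b \<le> tilt \<xi> z"
  shows "a = b"
proof -
  have "midpoint a b \<in> C \<inter> effdom R"
    using convex_Int[OF assms(1) convex_effdom] a b
    by (meson convex_contains_segment midpoint_in_closed_segment subsetD)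
  then have "tilt \<xi> a \<le> tilt \<xi> (midpoint a b)" "tilt \<xi> b \<le> tilt \<xi> (midpoint a b)"
    using a_min b_min by auto
  moreover have "tilt \<xi> (midpoint a b) + \<sigma> / 4 * (norm (a - b))\<^sup>2 \<le> (tilt \<xi> a + tilt \<xi> b) / 2"
    using tilt_midpoint a b by blast
  ultimately have "\<sigma> / 4 * (norm (a - b))\<^sup>2 \<le> 0" by argo
  then show ?thesis using sigma_pos by (simp add: mult_le_0_iff)
qed

lemma subdiff_iff_tilt_min:
  "\<xi> \<in> subdiff R x \<longleftrightarrow> x \<in> effdom R \<and> (\<forall>z\<in>effdom R. tilt \<xi> x \<le> tilt \<xi> z)"
  unfolding subdiff_iff tilt_def by (auto simp: inner_diff_right algebra_simps)

lemma ereal_tilt_min_iff: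
  "(\<forall>z. R x - ereal (\<xi> \<bullet> x) \<le> R z - ereal (\<xi> \<bullet> z)) \<longleftrightarrow> \<xi> \<in> subdiff R x"
proof
  assume min: "\<forall>z. R x - ereal (\<xi> \<bullet> x) \<le> R z - ereal (\<xi> \<bullet> z)"
  obtain z where z: "z \<in> effdom R" using effdom_nonempty by blast
  have x: "x \<in> effdom R"
    using min[rule_format, of z] R_eq_Rreal[OF z] R_notin_effdom[of x] by force
  have "tilt \<xi> x \<le> tilt \<xi> z" if "z \<in> effdom R" for z
    using min[rule_format, of z] R_eq_Rreal[OF x] R_eq_Rreal[OF that] unfolding tilt_def by simp
  then show "\<xi> \<in> subdiff R x" using x unfolding subdiff_iff_tilt_min by blast
next
  assume "\<xi> \<in> subdiff R x"
  then have x: "x \<in> effdom R" and min: "\<And>z. z \<in> effdom R \<Longrightarrow> tilt \<xi> x \<le> tilt \<xi> z"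
    unfolding subdiff_iff_tilt_min by auto
  show "\<forall>z. R x - ereal (\<xi> \<bullet> x) \<le> R z - ereal (\<xi> \<bullet> z)"
  proof
    fix z
    show "R x - ereal (\<xi> \<bullet> x) \<le> R z - ereal (\<xi> \<bullet> z)"
    proof (cases "z \<in> effdom R")
      case True
      then show ?thesis using min[OF True] R_eq_Rreal[OF x] R_eq_Rreal[OF True] unfolding tilt_def by simp
    qed (simp add: R_notin_effdom)
  qed
qed

lemma gradRstar_subdiff: "\<xi> \<in> subdiff R (gradRstar R \<xi>)"
proof -
  obtain x where x: "x \<in> effdom R" "\<And>z. z \<in> effdom R \<Longrightarrow> tilt \<xi> x \<le> tilt \<xi> z"
    using tilt_attains_min[of UNIV \<xi>] effdom_nonempty by auto
  have "\<exists>!x. \<forall>z. R x - ereal (\<xi> \<bullet> x) \<le> R z - ereal (\<xi> \<bullet> z)"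
    unfolding ereal_tilt_min_iff subdiff_iff_tilt_min
    using x tilt_min_unique[of UNIV] by blast
  then show ?thesis
    unfolding gradRstar_def using theI'[where P = "\<lambda>x. \<xi> \<in> subdiff R x"] ereal_tilt_min_iff by simp
qed

lemma gradRstar_in_effdom: "gradRstar R \<xi> \<in> effdom R"
  using gradRstar_subdiff subdiff_iff by blast

lemma gradRstar_eqI: "\<xi> \<in> subdiff R x \<Longrightarrow> gradRstar R \<xi> = x"
  using gradRstar_subdiff[of \<xi>] tilt_min_unique[of UNIV "gradRstar R \<xi>" x \<xi>]
  unfolding subdiff_iff_tilt_min by auto

lemma gradRstar_strongly_monotone:
  "2 * \<sigma> * (norm (gradRstar R \<xi>' - gradRstar R \<xi>))\<^sup>2 \<le> (\<xi>' - \<xi>) \<bullet> (gradRstar R \<xi>' - gradRstar R \<xi>)"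
  using subgradient_ineq_strong[OF gradRstar_subdiff gradRstar_in_effdom, of \<xi> \<xi>']
    subgradient_ineq_strong[OF gradRstar_subdiff gradRstar_in_effdom, of \<xi>' \<xi>]
  by (simp add: norm_minus_commute inner_diff_left inner_diff_right algebra_simps)

lemma gradRstar_lipschitz: "2 * \<sigma> * norm (gradRstar R \<xi>' - gradRstar R \<xi>) \<le> norm (\<xi>' - \<xi>)"
proof -
  let ?d = "norm (gradRstar R \<xi>' - gradRstar R \<xi>)"
  have "2 * \<sigma> * ?d\<^sup>2 \<le> norm (\<xi>' - \<xi>) * ?d"
    using gradRstar_strongly_monotone[of \<xi>' \<xi>]
      norm_cauchy_schwarz[of "\<xi>' - \<xi>" "gradRstar R \<xi>' - gradRstar R \<xi>"] by linarith
  then have "(2 * \<sigma> * ?d) * ?d \<le> norm (\<xi>' - \<xi>) * ?d" by (simp add: power2_eq_square algebra_simps)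
  then show ?thesis by (cases "?d = 0") auto
qed

lemma gradRstar_tendsto:
  assumes "(f \<longlongrightarrow> \<xi>) F"
  shows "((\<lambda>n. gradRstar R (f n)) \<longlongrightarrow> gradRstar R \<xi>) F"
proof -
  have "(1 / (2 * \<sigma>))-lipschitz_on UNIV (gradRstar R)"
    using gradRstar_lipschitz sigma_pos
    by (intro lipschitz_onI) (auto simp: dist_norm field_simps)
  then have "continuous_on UNIV (gradRstar R)" by (rule lipschitz_on_continuous_on)
  then show ?thesis
    using continuous_on_tendsto_compose[of UNIV "gradRstar R" f \<xi> F] assms by auto
qed

definition breg :: "'a \<Rightarrow> 'a \<Rightarrow> 'a \<Rightarrow> real" where
  "breg \<xi> z x = Rreal z - Rreal x - \<xi> \<bullet> (z - x)"

lemma bregman_eq_breg: "z \<in> effdom R \<Longrightarrow> x \<in> effdom R \<Longrightarrow> bregman R \<xi> z x = ereal (breg \<xi> z x)"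
  unfolding bregman_def breg_def using R_eq_Rreal by simp

lemma bregman_notin_effdom: "x \<in> effdom R \<Longrightarrow> z \<notin> effdom R \<Longrightarrow> bregman R \<xi> z x = \<infinity>"
  unfolding bregman_def using R_notin_effdom R_eq_Rreal by simp

lemma breg_ge_norm_sq: "\<xi> \<in> subdiff R x \<Longrightarrow> z \<in> effdom R \<Longrightarrow> \<sigma> * (norm (z - x))\<^sup>2 \<le> breg \<xi> z x"
  using subgradient_ineq_strong unfolding breg_def by fastforce

lemma breg_nonneg: "\<xi> \<in> subdiff R x \<Longrightarrow> z \<in> effdom R \<Longrightarrow> 0 \<le> breg \<xi> z x"
  using breg_ge_norm_sq[of \<xi> x z] sigma_pos by (meson order_trans zero_le_mult_iff zero_le_power2 less_imp_le)

lemma norm_le_if_breg_le: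
  assumes "\<xi> \<in> subdiff R x" "z \<in> effdom R" "breg \<xi> z x \<le> \<sigma> * \<rho>\<^sup>2" "0 \<le> \<rho>"
  shows "norm (z - x) \<le> \<rho>"
proof -
  have "\<sigma> * (norm (z - x))\<^sup>2 \<le> \<sigma> * \<rho>\<^sup>2" using breg_ge_norm_sq[OF assms(1,2)] assms(3) by linarith
  then have "(norm (z - x))\<^sup>2 \<le> \<rho>\<^sup>2" using sigma_pos by simp
  then show ?thesis using assms(4) by (simp add: power2_le_iff_abs_le)
qed

lemma breg_dual_update_le:
  assumes "z \<in> effdom R"
  shows "breg \<xi>' z (gradRstar R \<xi>') - breg \<xi> z (gradRstar R \<xi>)
    \<le> (norm (\<xi>' - \<xi>))\<^sup>2 / (4 * \<sigma>) + (\<xi>' - \<xi>) \<bullet> (gradRstar R \<xi> - z)"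
proof -
  let ?x = "gradRstar R \<xi>" and ?x' = "gradRstar R \<xi>'"
  let ?a = "norm (\<xi>' - \<xi>)" and ?b = "norm (?x' - ?x)"
  have "Rreal ?x + \<xi> \<bullet> (?x' - ?x) + \<sigma> * ?b\<^sup>2 \<le> Rreal ?x'"
    using subgradient_ineq_strong[OF gradRstar_subdiff gradRstar_in_effdom] .
  moreover have "(\<xi>' - \<xi>) \<bullet> (?x' - ?x) \<le> ?a * ?b" by (rule norm_cauchy_schwarz)
  moreover have "?a * ?b - \<sigma> * ?b\<^sup>2 \<le> ?a\<^sup>2 / (4 * \<sigma>)"
    using sigma_pos sum_power2_ge_zero[of "2 * \<sigma> * ?b - ?a" 0]
    by (simp add: field_simps power2_eq_square)
  ultimately show ?thesis
    unfolding breg_def by (simp add: inner_diff_left inner_diff_right algebra_simps)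
qed

text \<open>This is \<open>-R\<^sup>*(\<xi>)\<close>.\<close>

definition min_tilt :: "'a \<Rightarrow> real" where "min_tilt \<xi> = tilt \<xi> (gradRstar R \<xi>)"

lemma min_tilt_diff_le:
  "\<bar>min_tilt \<xi>' - min_tilt \<xi>\<bar> \<le> norm (\<xi>' - \<xi>) * (norm (gradRstar R \<xi>) + norm (gradRstar R \<xi>'))"
proof -
  have "min_tilt \<xi>' \<le> tilt \<xi>' (gradRstar R \<xi>)" "min_tilt \<xi> \<le> tilt \<xi> (gradRstar R \<xi>')"
    using gradRstar_subdiff gradRstar_in_effdom unfolding min_tilt_def subdiff_iff_tilt_min by auto
  moreover have "tilt \<xi>' (gradRstar R \<xi>) = min_tilt \<xi> - (\<xi>' - \<xi>) \<bullet> gradRstar R \<xi>"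
    "tilt \<xi> (gradRstar R \<xi>') = min_tilt \<xi>' + (\<xi>' - \<xi>) \<bullet> gradRstar R \<xi>'"
    unfolding min_tilt_def tilt_def by (simp_all add: inner_diff_left)
  moreover have "\<bar>(\<xi>' - \<xi>) \<bullet> gradRstar R \<xi>\<bar> \<le> norm (\<xi>' - \<xi>) * norm (gradRstar R \<xi>)"
    "\<bar>(\<xi>' - \<xi>) \<bullet> gradRstar R \<xi>'\<bar> \<le> norm (\<xi>' - \<xi>) * norm (gradRstar R \<xi>')"
    by (rule Cauchy_Schwarz_ineq2)+
  ultimately show ?thesis by (simp add: abs_le_iff algebra_simps)
qed

lemma min_tilt_tendsto:
  assumes "(f \<longlongrightarrow> \<xi>) F"
  shows "((\<lambda>n. min_tilt (f n)) \<longlongrightarrow> min_tilt \<xi>) F"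
proof -
  have "((\<lambda>n. norm (f n - \<xi>) * (norm (gradRstar R \<xi>) + norm (gradRstar R (f n)))) \<longlongrightarrow>
      0 * (norm (gradRstar R \<xi>) + norm (gradRstar R \<xi>))) F"
    using assms by (intro tendsto_intros gradRstar_tendsto) (simp add: LIM_zero_iff tendsto_norm_zero)
  then have bound: "((\<lambda>n. norm (f n - \<xi>) * (norm (gradRstar R \<xi>) + norm (gradRstar R (f n)))) \<longlongrightarrow> 0) F"
    by simp
  have "((\<lambda>n. min_tilt (f n) - min_tilt \<xi>) \<longlongrightarrow> 0) F"
    by (intro Lim_null_comparison[OF always_eventually bound] allI) (simp add: min_tilt_diff_le)
  then show ?thesis by (simp add: LIM_zero_iff)
qed

lemma breg_gradRstar_tendsto:
  assumes "(f \<longlongrightarrow> \<xi>) F" "z \<in> effdom R"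
  shows "((\<lambda>n. breg (f n) z (gradRstar R (f n))) \<longlongrightarrow> breg \<xi> z (gradRstar R \<xi>)) F"
proof -
  have "breg \<xi>' z (gradRstar R \<xi>') = Rreal z - \<xi>' \<bullet> z - min_tilt \<xi>'" for \<xi>'
    unfolding breg_def min_tilt_def tilt_def by (simp add: inner_diff_right)
  then show ?thesis by (simp only:) (intro tendsto_intros min_tilt_tendsto assms(1))
qed

end

section \<open>The tangential cone condition\<close>

locale tangential_cone_setting = strongly_convex_setting R \<sigma> x0 \<xi>0
  for R :: "'a::{real_inner,complete_space} \<Rightarrow> ereal" and \<sigma> x0 \<xi>0 +
  fixes F :: "'a \<Rightarrow> 'b::{real_inner,complete_space}" and L :: "'a \<Rightarrow> ('a \<Rightarrow>\<^sub>L 'b)"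
    and \<rho> \<eta> Lc :: real and y :: 'b and xb :: 'a
  assumes rho_pos: "\<rho> > 0"
    and L_cont: "continuous_on (cball x0 (2 * \<rho>)) L"
    and eta: "0 \<le> \<eta>" "\<eta> < 1"
    and tangential: "\<And>x x'. x \<in> cball x0 (2 * \<rho>) \<Longrightarrow> x' \<in> cball x0 (2 * \<rho>) \<Longrightarrow>
           norm (F x - F x' - L x' (x - x')) \<le> \<eta> * norm (F x - F x')"
    and Lc_pos: "Lc > 0" and L_bound: "\<And>x. x \<in> cball x0 (2 * \<rho>) \<Longrightarrow> norm (L x) \<le> Lc"
    and xb_dom: "xb \<in> effdom R" and xb_sol: "F xb = y" and xb_breg: "breg \<xi>0 xb x0 \<le> \<sigma> * \<rho>\<^sup>2"
begin

abbreviation B :: "'a set" where "B \<equiv> cball x0 (2 * \<rho>)"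

lemma x0_in_effdom: "x0 \<in> effdom R"
  using xi0 subdiff_iff by blast

lemma xb_near_x0: "norm (xb - x0) \<le> \<rho>"
  using norm_le_if_breg_le[OF xi0 xb_dom xb_breg] rho_pos by simp

lemma in_B_if_near_xb: "norm (x - xb) \<le> \<rho> \<Longrightarrow> x \<in> B"
  using xb_near_x0 norm_triangle_ineq[of "x - xb" "xb - x0"]
  by (simp add: dist_norm norm_minus_commute)

lemma xb_in_B: "xb \<in> B"
  using in_B_if_near_xb[of xb] rho_pos by simp

lemma diam_B: "u \<in> B \<Longrightarrow> w \<in> B \<Longrightarrow> norm (u - w) \<le> 4 * \<rho>"
  using norm_triangle_ineq[of "u - x0" "x0 - w"] by (simp add: dist_norm norm_minus_commute)

lemma norm_L_le_F_diff:
  "x \<in> B \<Longrightarrow> x' \<in> B \<Longrightarrow> norm (L x' (x - x')) \<le> (1 + \<eta>) * norm (F x - F x')"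
  using tangential[of x x'] norm_triangle_ineq4[of "F x - F x'" "F x - F x' - L x' (x - x')"]
  by (simp add: algebra_simps)

lemma F_diff_le_norm_L:
  "x \<in> B \<Longrightarrow> x' \<in> B \<Longrightarrow> (1 - \<eta>) * norm (F x - F x') \<le> norm (L x' (x - x'))"
  using tangential[of x x'] norm_triangle_ineq[of "L x' (x - x')" "F x - F x' - L x' (x - x')"]
  by (simp add: algebra_simps)

lemma continuous_on_F: "continuous_on B F"
proof (rule lipschitz_on_continuous_on)
  have "(1 - \<eta>) * norm (F x - F x') \<le> Lc * norm (x - x')" if "x \<in> B" "x' \<in> B" for x x'
    using F_diff_le_norm_L[OF that] norm_blinfun[of "L x'" "x - x'"] L_bound[OF that(2)]
      mult_right_mono[of "norm (L x')" Lc "norm (x - x')"] by simp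
  then show "(Lc / (1 - \<eta>))-lipschitz_on B F"
    using eta Lc_pos by (intro lipschitz_onI) (auto simp: dist_norm field_simps)
qed

lemma solves_iff_L_xb_eq_0: "x \<in> B \<Longrightarrow> F x = y \<longleftrightarrow> L xb (x - xb) = 0"
  using norm_L_le_F_diff[OF _ xb_in_B, of x] F_diff_le_norm_L[OF _ xb_in_B, of x] eta xb_sol
  by (auto simp: mult_le_0_iff)

text \<open>The key inequality of the Landweber analysis: \<open>L(x)\<^sup>*(F x - y\<^sup>\<delta>)\<close> is a descent direction
  for the distance to any solution \<open>xh\<close> in \<open>B\<close>.\<close>

lemma inner_adjoint_residual_ge:
  assumes x: "x \<in> B" and xh: "xh \<in> B" "F xh = y" and yd: "norm (yd - y) \<le> \<delta>"
  shows "(1 - \<eta>) * (norm (F x - yd))\<^sup>2 - (1 + \<eta>) * \<delta> * norm (F x - yd)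
    \<le> (x - xh) \<bullet> adjoint (blinfun_apply (L x)) (F x - yd)"
proof -
  define r where "r = F x - yd"
  define e where "e = F xh - F x - L x (xh - x)"
  have "(x - xh) \<bullet> adjoint (blinfun_apply (L x)) r = L x (x - xh) \<bullet> r"
    by (simp add: inner_adjoint_blinfun)
  also have "L x (x - xh) = r + (yd - y) + e"
    unfolding e_def r_def using xh(2) by (simp add: blinfun.diff_right algebra_simps)
  finally have eq: "(x - xh) \<bullet> adjoint (blinfun_apply (L x)) r = (norm r)\<^sup>2 + (yd - y) \<bullet> r + e \<bullet> r"
    by (simp add: inner_add_left power2_norm_eq_inner)
  have "norm (F xh - F x) \<le> norm r + \<delta>"
    using xh(2) yd norm_triangle_ineq[of "F x - yd" "yd - y"] unfolding r_def
    by (simp add: norm_minus_commute algebra_simps)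
  then have "norm e \<le> \<eta> * (norm r + \<delta>)"
    using tangential[OF xh(1) x] eta unfolding e_def by (meson mult_left_mono order_trans)
  then have "norm e * norm r \<le> \<eta> * (norm r + \<delta>) * norm r" by (rule mult_right_mono) simp
  then have "- (\<eta> * (norm r + \<delta>) * norm r) \<le> e \<bullet> r"
    using Cauchy_Schwarz_ineq2[of e r] by linarith
  moreover have "- \<delta> * norm r \<le> (yd - y) \<bullet> r"
    using Cauchy_Schwarz_ineq2[of "yd - y" r] mult_right_mono[OF yd, of "norm r"] by (simp; linarith)
  ultimately show ?thesis
    using eq unfolding r_def[symmetric] by (simp add: algebra_simps power2_eq_square)
qed

lemma norm_adjoint_L_le: "x \<in> B \<Longrightarrow> norm (adjoint (blinfun_apply (L x)) r) \<le> Lc * norm r"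
  using norm_adjoint_blinfun_le[of "L x" r] L_bound[of x] mult_right_mono[of "norm (L x)" Lc "norm r"]
  by simp

section \<open>The solution of minimal Bregman distance\<close>

definition linearized_solutions :: "'a set" where
  "linearized_solutions = cball x0 \<rho> \<inter> {x. L xb (x - xb) = 0}"

lemma closed_linearized_solutions: "closed linearized_solutions"
proof -
  have "closed {x. L xb (x - xb) = 0}"
    by (intro closed_Collect_eq continuous_intros)
  then show ?thesis unfolding linearized_solutions_def by (simp add: closed_Int)
qed

lemma convex_linearized_solutions: "convex linearized_solutions"
proof -
  have "convex {x. L xb (x - xb) = 0}"
  proof (rule convexI)
    fix a b :: 'a and u v :: real
    assume "a \<in> {x. L xb (x - xb) = 0}" "b \<in> {x. L xb (x - xb) = 0}" "u + v = 1"
    moreover have "u *\<^sub>R a + v *\<^sub>R b - xb = u *\<^sub>R (a - xb) + v *\<^sub>R (b - xb)"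
      using \<open>u + v = 1\<close> by (simp add: algebra_simps flip: scaleR_add_left)
    ultimately show "u *\<^sub>R a + v *\<^sub>R b \<in> {x. L xb (x - xb) = 0}"
      by (simp add: blinfun.add_right blinfun.scaleR_right)
  qed
  then show ?thesis unfolding linearized_solutions_def by (simp add: convex_Int)
qed

text \<open>Solutions with \<open>D_\<xi>\<^sub>0(z, x0) \<le> \<sigma>\<rho>\<^sup>2\<close> lie in \<open>cball x0 \<rho>\<close>, where solving \<open>F z = y\<close>
  is the linear condition \<open>L xb (z - xb) = 0\<close>; so minimizing the Bregman distance over all
  solutions is minimizing a tilted functional over a closed convex set.\<close>

lemma solution_in_linearized_solutions:
  assumes "z \<in> effdom R" "F z = y" "breg \<xi>0 z x0 \<le> \<sigma> * \<rho>\<^sup>2"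
  shows "z \<in> linearized_solutions"
proof -
  have "z \<in> cball x0 \<rho>"
    using norm_le_if_breg_le[OF xi0 assms(1,3)] rho_pos by (simp add: dist_norm norm_minus_commute)
  moreover from this have "z \<in> B" using rho_pos by auto
  ultimately show ?thesis
    unfolding linearized_solutions_def using solves_iff_L_xb_eq_0 assms(2) by simp
qed

lemma breg_x0_eq_tilt: "breg \<xi>0 x x0 = tilt \<xi>0 x - tilt \<xi>0 x0"
  unfolding breg_def tilt_def by (simp add: inner_diff_right)

lemma solution_breg_minimizer:
  obtains xd where "xd \<in> B" "xd \<in> effdom R" "F xd = y"
    "\<And>z. z \<in> effdom R \<Longrightarrow> F z = y \<Longrightarrow> breg \<xi>0 xd x0 \<le> breg \<xi>0 z x0"
    "\<And>z. z \<in> effdom R \<Longrightarrow> F z = y \<Longrightarrow> breg \<xi>0 z x0 \<le> breg \<xi>0 xd x0 \<Longrightarrow> z = xd"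
proof -
  let ?C = "linearized_solutions"
  have xb_C: "xb \<in> ?C"
    using solution_in_linearized_solutions[OF xb_dom xb_sol xb_breg] .
  obtain xd where xd: "xd \<in> ?C \<inter> effdom R" and min: "\<And>z. z \<in> ?C \<inter> effdom R \<Longrightarrow> tilt \<xi>0 xd \<le> tilt \<xi>0 z"
    using tilt_attains_min[OF closed_linearized_solutions convex_linearized_solutions] xb_C xb_dom by blast
  have xd_B: "xd \<in> B" using xd rho_pos unfolding linearized_solutions_def by auto
  have xd_le: "breg \<xi>0 xd x0 \<le> \<sigma> * \<rho>\<^sup>2"
    using min[of xb] xb_C xb_dom xb_breg unfolding breg_x0_eq_tilt by simp
  have le: "breg \<xi>0 xd x0 \<le> breg \<xi>0 z x0" if "z \<in> effdom R" "F z = y" for z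
  proof (cases "breg \<xi>0 z x0 \<le> \<sigma> * \<rho>\<^sup>2")
    case True
    then show ?thesis
      using min[of z] solution_in_linearized_solutions that unfolding breg_x0_eq_tilt by simp
  qed (use xd_le in simp)
  show thesis
  proof (rule that[OF xd_B _ _ le])
    show "xd \<in> effdom R" "F xd = y"
      using xd xd_B solves_iff_L_xb_eq_0 unfolding linearized_solutions_def by auto
    fix z assume z: "z \<in> effdom R" "F z = y" "breg \<xi>0 z x0 \<le> breg \<xi>0 xd x0"
    then have "z \<in> ?C" using solution_in_linearized_solutions xd_le by simp
    then show "z = xd"
      using tilt_min_unique[OF convex_linearized_solutions _ xd _ min] z min
      unfolding breg_x0_eq_tilt by force
  qed
qed

lemma xdag_eqI:
  assumes "B \<subseteq> domF" and xd: "xd \<in> B" "xd \<in> effdom R" "F xd = y"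
    and min: "\<And>z. z \<in> effdom R \<Longrightarrow> F z = y \<Longrightarrow> breg \<xi>0 xd x0 \<le> breg \<xi>0 z x0"
    and unique: "\<And>z. z \<in> effdom R \<Longrightarrow> F z = y \<Longrightarrow> breg \<xi>0 z x0 \<le> breg \<xi>0 xd x0 \<Longrightarrow> z = xd"
  shows "xdag R F domF y \<xi>0 x0 = xd"
  unfolding xdag_def
proof (rule the_equality)
  have "bregman R \<xi>0 xd x0 \<le> bregman R \<xi>0 z x0" if "F z = y" for z
    using min[OF _ that] bregman_eq_breg[OF xd(2) x0_in_effdom] bregman_eq_breg[OF _ x0_in_effdom]
      bregman_notin_effdom[OF x0_in_effdom] by (cases "z \<in> effdom R") auto
  then show "xd \<in> domF \<and> F xd = y \<and> (\<forall>z\<in>domF. F z = y \<longrightarrow> bregman R \<xi>0 xd x0 \<le> bregman R \<xi>0 z x0)"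
    using assms(1) xd by blast
next
  fix w assume w: "w \<in> domF \<and> F w = y \<and> (\<forall>z\<in>domF. F z = y \<longrightarrow> bregman R \<xi>0 w x0 \<le> bregman R \<xi>0 z x0)"
  then have le: "bregman R \<xi>0 w x0 \<le> bregman R \<xi>0 xd x0" using assms(1) xd by blast
  then have "w \<in> effdom R"
    using bregman_eq_breg[OF xd(2) x0_in_effdom] bregman_notin_effdom[OF x0_in_effdom] by force
  with le show "w = xd"
    using unique w bregman_eq_breg[OF _ x0_in_effdom] xd(2) by simp
qed

end

section \<open>One step of the method\<close>

lemma stepsize_bounds:
  fixes adaptive exact :: bool
  assumes "0 \<le> nr" "0 \<le> ng" "ng \<le> Lc * nr" "Lc > 0" "\<mu>0 > 0" "\<mu>1 > 0"
  defines "s \<equiv> stepsize adaptive exact \<mu>0 \<mu>1 Lc nr ng"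
  shows "0 \<le> s" "s \<le> max (\<mu>0 / Lc\<^sup>2) \<mu>1" "s * ng\<^sup>2 \<le> \<mu>0 * nr\<^sup>2"
    "nr \<noteq> 0 \<Longrightarrow> min (\<mu>0 / Lc\<^sup>2) \<mu>1 \<le> s"
proof -
  have ng2: "ng\<^sup>2 \<le> Lc\<^sup>2 * nr\<^sup>2"
    using power_mono[OF assms(3) assms(2)] by (simp add: power_mult_distrib)
  show "0 \<le> s" "s \<le> max (\<mu>0 / Lc\<^sup>2) \<mu>1" unfolding s_def stepsize_def using assms by auto
  show "s * ng\<^sup>2 \<le> \<mu>0 * nr\<^sup>2"
  proof (cases "adaptive \<and> \<not> (exact \<and> nr = 0) \<and> ng \<noteq> 0")
    case True
    then have "s \<le> \<mu>0 * nr\<^sup>2 / ng\<^sup>2" unfolding s_def stepsize_def by auto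
    then show ?thesis using True by (simp add: field_simps)
  next
    case False
    have "\<mu>0 / Lc\<^sup>2 * ng\<^sup>2 \<le> \<mu>0 / Lc\<^sup>2 * (Lc\<^sup>2 * nr\<^sup>2)"
      using ng2 assms by (intro mult_left_mono) auto
    then show ?thesis using False assms unfolding s_def stepsize_def by (auto split: if_splits)
  qed
  show "min (\<mu>0 / Lc\<^sup>2) \<mu>1 \<le> s" if "nr \<noteq> 0"
  proof (cases "adaptive \<and> ng \<noteq> 0")
    case True
    have "\<mu>0 / Lc\<^sup>2 \<le> \<mu>0 * nr\<^sup>2 / ng\<^sup>2"
      using ng2 True assms by (simp add: field_simps)
    then show ?thesis using True that unfolding s_def stepsize_def by auto
  next
    case False
    then show ?thesis using that unfolding s_def stepsize_def by auto
  qed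
qed

lemma momentum_bounds:
  fixes \<sigma> \<alpha> \<gamma> :: real and g m :: "'a::real_inner"
  assumes "0 \<le> \<beta>"
  defines "b \<equiv> momentum \<beta> \<sigma> \<alpha> \<gamma> g m"
  shows "0 \<le> b" "b \<le> \<beta>" "m = 0 \<Longrightarrow> b = 0"
    "b > 0 \<Longrightarrow> m \<noteq> 0 \<and> b * (norm m)\<^sup>2 \<le> \<alpha> * (g \<bullet> m) - 2 * \<sigma> * \<gamma>"
proof -
  show "0 \<le> b" "b \<le> \<beta>" "m = 0 \<Longrightarrow> b = 0" unfolding b_def momentum_def using assms by auto
  show "m \<noteq> 0 \<and> b * (norm m)\<^sup>2 \<le> \<alpha> * (g \<bullet> m) - 2 * \<sigma> * \<gamma>" if "b > 0"
  proof -
    have "m \<noteq> 0" using that unfolding b_def momentum_def by (auto split: if_splits)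
    moreover from this have "b \<le> (\<alpha> * (g \<bullet> m) - 2 * \<sigma> * \<gamma>) / (norm m)\<^sup>2"
      using that unfolding b_def momentum_def by auto
    ultimately show ?thesis by (simp add: field_simps)
  qed
qed

locale momentum_landweber = tangential_cone_setting R \<sigma> x0 \<xi>0 F L \<rho> \<eta> Lc y xb
  for R :: "'a::{real_inner,complete_space} \<Rightarrow> ereal" and \<sigma> x0 \<xi>0
    and F :: "'a \<Rightarrow> 'b::{real_inner,complete_space}" and L \<rho> \<eta> Lc y xb +
  fixes \<beta> \<mu>0 \<mu>1 \<tau> :: real and adaptive :: bool
  assumes beta: "0 \<le> \<beta>" "\<beta> < 1" and tau: "\<tau> > 1" and mu0: "\<mu>0 > 0" and mu1: "\<mu>1 > 0"
    and param: "1 - (1 + \<eta>) / \<tau> - \<eta> - \<mu>0 / (4 * \<sigma>) > 0"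
begin

definition "state exact \<delta> yd n = iter R F L Lc \<eta> \<sigma> \<beta> \<mu>0 \<mu>1 adaptive exact \<xi>0 \<delta> yd n"
definition "dual_prev exact \<delta> yd n = fst (state exact \<delta> yd n)"
definition "dual exact \<delta> yd n = fst (snd (state exact \<delta> yd n))"
definition "gam exact \<delta> yd n = snd (snd (state exact \<delta> yd n))"
definition "primal exact \<delta> yd n = gradRstar R (dual exact \<delta> yd n)"
definition "res exact \<delta> yd n = F (primal exact \<delta> yd n) - yd"
definition "grd exact \<delta> yd n = adjoint (blinfun_apply (L (primal exact \<delta> yd n))) (res exact \<delta> yd n)"
definition "alpha exact \<delta> yd n =
  stepsize adaptive exact \<mu>0 \<mu>1 Lc (norm (res exact \<delta> yd n)) (norm (grd exact \<delta> yd n))"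
definition "incr exact \<delta> yd n = dual exact \<delta> yd n - dual_prev exact \<delta> yd n"
definition "mom exact \<delta> yd n =
  momentum \<beta> \<sigma> (alpha exact \<delta> yd n) (gam exact \<delta> yd n) (grd exact \<delta> yd n) (incr exact \<delta> yd n)"

definition "c0 = 1 - (1 + \<eta>) / \<tau> - \<eta> - \<mu>0 / (4 * \<sigma>)"
definition "alpha_min = min (\<mu>0 / Lc\<^sup>2) \<mu>1"
definition "alpha_max = max (\<mu>0 / Lc\<^sup>2) \<mu>1"

lemma c0_pos: "c0 > 0"
  using param unfolding c0_def by simp

lemma alpha_min_pos: "alpha_min > 0"
  unfolding alpha_min_def using mu0 mu1 Lc_pos by simp

lemma iter_x_eq_primal: "iter_x R F L Lc \<eta> \<sigma> \<beta> \<mu>0 \<mu>1 adaptive exact \<xi>0 \<delta> yd n = primal exact \<delta> yd n"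
  unfolding iter_x_def iter_xi_def primal_def dual_def state_def ..

lemma iter_xi_eq_dual: "iter_xi R F L Lc \<eta> \<sigma> \<beta> \<mu>0 \<mu>1 adaptive exact \<xi>0 \<delta> yd n = dual exact \<delta> yd n"
  unfolding iter_xi_def dual_def state_def ..

lemma state_0: "dual exact \<delta> yd 0 = \<xi>0" "dual_prev exact \<delta> yd 0 = \<xi>0" "gam exact \<delta> yd 0 = 0"
  unfolding dual_def dual_prev_def gam_def state_def by simp_all

lemma state_Suc:
  "dual_prev exact \<delta> yd (Suc n) = dual exact \<delta> yd n"
  "dual exact \<delta> yd (Suc n) = dual exact \<delta> yd n - alpha exact \<delta> yd n *\<^sub>R grd exact \<delta> yd n
     + mom exact \<delta> yd n *\<^sub>R incr exact \<delta> yd n"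
  "gam exact \<delta> yd (Suc n) = (dual exact \<delta> yd (Suc n) - dual exact \<delta> yd n) \<bullet> (primal exact \<delta> yd (Suc n) - primal exact \<delta> yd n)
     - (1 - \<eta>) * alpha exact \<delta> yd n * (norm (res exact \<delta> yd n))\<^sup>2
     + (1 + \<eta>) * alpha exact \<delta> yd n * \<delta> * norm (res exact \<delta> yd n) + mom exact \<delta> yd n * gam exact \<delta> yd n"
proof -
  obtain a b c where abc: "state exact \<delta> yd n = (a, b, c)" by (cases "state exact \<delta> yd n") auto
  then have n: "dual_prev exact \<delta> yd n = a" "dual exact \<delta> yd n = b" "gam exact \<delta> yd n = c"
    unfolding dual_def dual_prev_def gam_def by simp_all
  note defs = state_def dual_def dual_prev_def gam_def primal_def res_def grd_def alpha_def incr_def mom_def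
  show "dual_prev exact \<delta> yd (Suc n) = dual exact \<delta> yd n"
    using abc n unfolding defs by (simp add: Let_def)
  show dual: "dual exact \<delta> yd (Suc n) = dual exact \<delta> yd n - alpha exact \<delta> yd n *\<^sub>R grd exact \<delta> yd n
     + mom exact \<delta> yd n *\<^sub>R incr exact \<delta> yd n"
    using abc n unfolding defs by (simp add: Let_def)
  show "gam exact \<delta> yd (Suc n) = (dual exact \<delta> yd (Suc n) - dual exact \<delta> yd n) \<bullet> (primal exact \<delta> yd (Suc n) - primal exact \<delta> yd n)
     - (1 - \<eta>) * alpha exact \<delta> yd n * (norm (res exact \<delta> yd n))\<^sup>2
     + (1 + \<eta>) * alpha exact \<delta> yd n * \<delta> * norm (res exact \<delta> yd n) + mom exact \<delta> yd n * gam exact \<delta> yd n"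
    using abc n unfolding dual primal_def[of _ _ _ "Suc n"] unfolding defs by (simp add: Let_def)
qed

lemma incr_0: "incr exact \<delta> yd 0 = 0"
  unfolding incr_def state_0 by simp

lemma incr_Suc: "incr exact \<delta> yd (Suc n) = mom exact \<delta> yd n *\<^sub>R incr exact \<delta> yd n - alpha exact \<delta> yd n *\<^sub>R grd exact \<delta> yd n"
  unfolding incr_def state_Suc by simp

lemma incr_Suc_eq_diff: "incr exact \<delta> yd (Suc n) = dual exact \<delta> yd (Suc n) - dual exact \<delta> yd n"
  unfolding incr_def state_Suc ..

lemma primal_0: "primal exact \<delta> yd 0 = x0"
  unfolding primal_def state_0 using gradRstar_eqI[OF xi0] .

lemma primal_in_effdom: "primal exact \<delta> yd n \<in> effdom R"
  unfolding primal_def using gradRstar_in_effdom .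

lemma dual_subdiff: "dual exact \<delta> yd n \<in> subdiff R (primal exact \<delta> yd n)"
  unfolding primal_def using gradRstar_subdiff .

lemma breg_primal_nonneg: "z \<in> effdom R \<Longrightarrow> 0 \<le> breg (dual exact \<delta> yd n) z (primal exact \<delta> yd n)"
  using breg_nonneg[OF dual_subdiff] .

lemma norm_grd_le: "primal exact \<delta> yd n \<in> B \<Longrightarrow> norm (grd exact \<delta> yd n) \<le> Lc * norm (res exact \<delta> yd n)"
  unfolding grd_def using norm_adjoint_L_le by blast

lemma alpha_nonneg: "0 \<le> alpha exact \<delta> yd n"
  unfolding alpha_def stepsize_def using mu0 mu1 Lc_pos by auto

lemma alpha_le_max: "alpha exact \<delta> yd n \<le> alpha_max"
  unfolding alpha_def stepsize_def alpha_max_def using mu0 mu1 Lc_pos by auto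

lemma alpha_bounds:
  assumes "primal exact \<delta> yd n \<in> B"
  shows "alpha exact \<delta> yd n * (norm (grd exact \<delta> yd n))\<^sup>2 \<le> \<mu>0 * (norm (res exact \<delta> yd n))\<^sup>2"
    and "res exact \<delta> yd n \<noteq> 0 \<Longrightarrow> alpha_min \<le> alpha exact \<delta> yd n"
  using stepsize_bounds[of "norm (res exact \<delta> yd n)" "norm (grd exact \<delta> yd n)" Lc \<mu>0 \<mu>1 adaptive exact]
    norm_grd_le[OF assms] Lc_pos mu0 mu1 unfolding alpha_def alpha_min_def by auto

lemma mom_bounds:
  "0 \<le> mom exact \<delta> yd n" "mom exact \<delta> yd n \<le> \<beta>" "incr exact \<delta> yd n = 0 \<Longrightarrow> mom exact \<delta> yd n = 0"
  "mom exact \<delta> yd n > 0 \<Longrightarrow> incr exact \<delta> yd n \<noteq> 0 \<and>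
     mom exact \<delta> yd n * (norm (incr exact \<delta> yd n))\<^sup>2
       \<le> alpha exact \<delta> yd n * (grd exact \<delta> yd n \<bullet> incr exact \<delta> yd n) - 2 * \<sigma> * gam exact \<delta> yd n"
  using momentum_bounds[OF beta(1), where \<sigma> = \<sigma> and \<alpha> = "alpha exact \<delta> yd n"
      and \<gamma> = "gam exact \<delta> yd n" and g = "grd exact \<delta> yd n" and m = "incr exact \<delta> yd n"]
  unfolding mom_def by auto

lemma incr_Suc_inner_le:
  assumes xn: "primal exact \<delta> yd n \<in> B" and xh: "xh \<in> B" "F xh = y" and yd: "norm (yd - y) \<le> \<delta>"
    and inv: "incr exact \<delta> yd n \<bullet> (primal exact \<delta> yd n - xh) \<le> gam exact \<delta> yd n"
  shows "incr exact \<delta> yd (Suc n) \<bullet> (primal exact \<delta> yd n - xh) \<le> mom exact \<delta> yd n * gam exact \<delta> yd n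
    - alpha exact \<delta> yd n * ((1 - \<eta>) * (norm (res exact \<delta> yd n))\<^sup>2 - (1 + \<eta>) * \<delta> * norm (res exact \<delta> yd n))"
proof -
  define v where "v = primal exact \<delta> yd n - xh"
  have "alpha exact \<delta> yd n * ((1 - \<eta>) * (norm (res exact \<delta> yd n))\<^sup>2 - (1 + \<eta>) * \<delta> * norm (res exact \<delta> yd n))
      \<le> alpha exact \<delta> yd n * (v \<bullet> grd exact \<delta> yd n)"
    using inner_adjoint_residual_ge[OF xn xh yd] alpha_nonneg unfolding grd_def res_def v_def
    by (intro mult_left_mono) auto
  moreover have "mom exact \<delta> yd n * (incr exact \<delta> yd n \<bullet> v) \<le> mom exact \<delta> yd n * gam exact \<delta> yd n"
    using inv mom_bounds(1) unfolding v_def by (rule mult_left_mono)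
  moreover have "incr exact \<delta> yd (Suc n) \<bullet> v = mom exact \<delta> yd n * (incr exact \<delta> yd n \<bullet> v) - alpha exact \<delta> yd n * (v \<bullet> grd exact \<delta> yd n)"
    unfolding incr_Suc by (simp add: inner_diff_left inner_commute[of "grd exact \<delta> yd n"])
  ultimately show ?thesis unfolding v_def[symmetric] by linarith
qed

lemma norm_incr_Suc_sq_le:
  assumes "primal exact \<delta> yd n \<in> B"
  shows "(norm (incr exact \<delta> yd (Suc n)))\<^sup>2
    \<le> alpha exact \<delta> yd n * \<mu>0 * (norm (res exact \<delta> yd n))\<^sup>2 - 4 * \<sigma> * (mom exact \<delta> yd n * gam exact \<delta> yd n)"
proof -
  define a b g m \<gamma> where "a = alpha exact \<delta> yd n" and "b = mom exact \<delta> yd n" and "g = grd exact \<delta> yd n"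
    and "m = incr exact \<delta> yd n" and "\<gamma> = gam exact \<delta> yd n"
  have "(norm (incr exact \<delta> yd (Suc n)))\<^sup>2 = a\<^sup>2 * (norm g)\<^sup>2 - 2 * a * b * (g \<bullet> m) + b\<^sup>2 * (norm m)\<^sup>2"
    unfolding incr_Suc power2_norm_eq_inner a_def b_def g_def m_def
    by (simp add: inner_diff_left inner_diff_right inner_commute algebra_simps power2_eq_square)
  moreover have "b * (b * (norm m)\<^sup>2) \<le> b * (a * (g \<bullet> m) - 2 * \<sigma> * \<gamma>)"
    using mom_bounds(1,4)[of exact \<delta> yd n] unfolding a_def b_def g_def m_def \<gamma>_def
    by (cases "b > 0") (auto simp: b_def intro: mult_left_mono)
  moreover have "a * (a * (norm g)\<^sup>2) \<le> a * (\<mu>0 * (norm (res exact \<delta> yd n))\<^sup>2)"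
    using alpha_bounds(1)[OF assms] alpha_nonneg unfolding a_def g_def by (rule mult_left_mono)
  moreover have "0 \<le> b * (b * (norm m)\<^sup>2)" using mom_bounds(1) unfolding b_def by simp
  ultimately show ?thesis
    unfolding a_def[symmetric] b_def[symmetric] \<gamma>_def[symmetric]
    by (simp add: power2_eq_square algebra_simps)
qed

text \<open>The invariant \<open>\<langle>m\<^sub>n, x\<^sub>n - xh\<rangle> \<le> \<gamma>\<^sub>n\<close> that the choice of \<open>\<beta>\<^sub>n\<close> is designed to propagate.\<close>

lemma invariant_Suc:
  assumes xn: "primal exact \<delta> yd n \<in> B" and xh: "xh \<in> B" "F xh = y" and yd: "norm (yd - y) \<le> \<delta>"
    and inv: "incr exact \<delta> yd n \<bullet> (primal exact \<delta> yd n - xh) \<le> gam exact \<delta> yd n"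
  shows "incr exact \<delta> yd (Suc n) \<bullet> (primal exact \<delta> yd (Suc n) - xh) \<le> gam exact \<delta> yd (Suc n)"
proof -
  have "incr exact \<delta> yd (Suc n) \<bullet> (primal exact \<delta> yd (Suc n) - xh)
    = incr exact \<delta> yd (Suc n) \<bullet> (primal exact \<delta> yd (Suc n) - primal exact \<delta> yd n)
      + incr exact \<delta> yd (Suc n) \<bullet> (primal exact \<delta> yd n - xh)"
    by (simp add: inner_diff_right)
  then show ?thesis
    using incr_Suc_inner_le[OF assms] unfolding state_Suc(3) incr_Suc_eq_diff[symmetric]
    by (simp add: algebra_simps)
qed

lemma breg_Suc_le:
  assumes xn: "primal exact \<delta> yd n \<in> B" and xh: "xh \<in> B" "xh \<in> effdom R" "F xh = y"
    and yd: "norm (yd - y) \<le> \<delta>"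
    and inv: "incr exact \<delta> yd n \<bullet> (primal exact \<delta> yd n - xh) \<le> gam exact \<delta> yd n"
  shows "breg (dual exact \<delta> yd (Suc n)) xh (primal exact \<delta> yd (Suc n)) \<le> breg (dual exact \<delta> yd n) xh (primal exact \<delta> yd n)
    - alpha exact \<delta> yd n * ((1 - \<eta> - \<mu>0 / (4 * \<sigma>)) * (norm (res exact \<delta> yd n))\<^sup>2 - (1 + \<eta>) * \<delta> * norm (res exact \<delta> yd n))"
proof -
  have "breg (dual exact \<delta> yd (Suc n)) xh (primal exact \<delta> yd (Suc n)) - breg (dual exact \<delta> yd n) xh (primal exact \<delta> yd n)
      \<le> (norm (incr exact \<delta> yd (Suc n)))\<^sup>2 / (4 * \<sigma>) + incr exact \<delta> yd (Suc n) \<bullet> (primal exact \<delta> yd n - xh)"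
    using breg_dual_update_le[OF xh(2)] unfolding primal_def incr_Suc_eq_diff by blast
  moreover have "(norm (incr exact \<delta> yd (Suc n)))\<^sup>2 / (4 * \<sigma>)
      \<le> alpha exact \<delta> yd n * (\<mu>0 / (4 * \<sigma>)) * (norm (res exact \<delta> yd n))\<^sup>2 - mom exact \<delta> yd n * gam exact \<delta> yd n"
    using norm_incr_Suc_sq_le[OF xn] sigma_pos by (simp add: field_simps)
  ultimately show ?thesis
    using incr_Suc_inner_le[OF xn xh(1,3) yd inv] by (simp add: algebra_simps)
qed

definition "noise_dominated exact \<delta> yd n \<longleftrightarrow>
  (\<forall>k<n. \<tau> * \<delta> * norm (res exact \<delta> yd k) \<le> (norm (res exact \<delta> yd k))\<^sup>2)"

lemma descent_coef_ge:
  assumes "\<tau> * \<delta> * r \<le> r\<^sup>2"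
  shows "c0 * r\<^sup>2 \<le> (1 - \<eta> - \<mu>0 / (4 * \<sigma>)) * r\<^sup>2 - (1 + \<eta>) * \<delta> * r"
proof -
  have "(1 + \<eta>) * (\<delta> * r) \<le> (1 + \<eta>) * (r\<^sup>2 / \<tau>)"
    using assms tau eta by (intro mult_left_mono) (auto simp: field_simps)
  then show ?thesis unfolding c0_def by (simp add: algebra_simps)
qed

lemma breg_Suc_le_descent:
  assumes "primal exact \<delta> yd n \<in> B" "xh \<in> B" "xh \<in> effdom R" "F xh = y" "norm (yd - y) \<le> \<delta>"
    "incr exact \<delta> yd n \<bullet> (primal exact \<delta> yd n - xh) \<le> gam exact \<delta> yd n"
    and dom: "\<tau> * \<delta> * norm (res exact \<delta> yd n) \<le> (norm (res exact \<delta> yd n))\<^sup>2"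
  shows "breg (dual exact \<delta> yd (Suc n)) xh (primal exact \<delta> yd (Suc n))
    \<le> breg (dual exact \<delta> yd n) xh (primal exact \<delta> yd n) - c0 * (alpha exact \<delta> yd n * (norm (res exact \<delta> yd n))\<^sup>2)"
proof -
  have "alpha exact \<delta> yd n * (c0 * (norm (res exact \<delta> yd n))\<^sup>2) \<le> alpha exact \<delta> yd n *
      ((1 - \<eta> - \<mu>0 / (4 * \<sigma>)) * (norm (res exact \<delta> yd n))\<^sup>2 - (1 + \<eta>) * \<delta> * norm (res exact \<delta> yd n))"
    by (rule mult_left_mono[OF descent_coef_ge[OF dom] alpha_nonneg])
  then show ?thesis using breg_Suc_le[OF assms(1-6)] by (simp add: algebra_simps)
qed

lemma iterates_near_xb:
  assumes yd: "norm (yd - y) \<le> \<delta>" and nd: "noise_dominated exact \<delta> yd n"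
  shows "(\<forall>k\<le>n. norm (primal exact \<delta> yd k - xb) \<le> \<rho>)
    \<and> breg (dual exact \<delta> yd n) xb (primal exact \<delta> yd n) + c0 * (\<Sum>k<n. alpha exact \<delta> yd k * (norm (res exact \<delta> yd k))\<^sup>2)
      \<le> breg \<xi>0 xb x0
    \<and> incr exact \<delta> yd n \<bullet> (primal exact \<delta> yd n - xb) \<le> gam exact \<delta> yd n"
  using nd
proof (induction n)
  case 0
  then show ?case using xb_near_x0 by (simp add: primal_0 state_0 incr_0 norm_minus_commute)
next
  case (Suc n)
  then have IH: "\<forall>k\<le>n. norm (primal exact \<delta> yd k - xb) \<le> \<rho>"
    "breg (dual exact \<delta> yd n) xb (primal exact \<delta> yd n) + c0 * (\<Sum>k<n. alpha exact \<delta> yd k * (norm (res exact \<delta> yd k))\<^sup>2)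
      \<le> breg \<xi>0 xb x0"
    "incr exact \<delta> yd n \<bullet> (primal exact \<delta> yd n - xb) \<le> gam exact \<delta> yd n"
    unfolding noise_dominated_def by auto
  have xn: "primal exact \<delta> yd n \<in> B" using IH(1) in_B_if_near_xb by blast
  have sum: "breg (dual exact \<delta> yd (Suc n)) xb (primal exact \<delta> yd (Suc n))
      + c0 * (\<Sum>k<Suc n. alpha exact \<delta> yd k * (norm (res exact \<delta> yd k))\<^sup>2) \<le> breg \<xi>0 xb x0"
    using breg_Suc_le_descent[OF xn xb_in_B xb_dom xb_sol yd IH(3)] IH(2) Suc.prems
    unfolding noise_dominated_def by (simp add: algebra_simps)
  have "0 \<le> c0 * (\<Sum>k<Suc n. alpha exact \<delta> yd k * (norm (res exact \<delta> yd k))\<^sup>2)"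
    using c0_pos alpha_nonneg by (intro mult_nonneg_nonneg sum_nonneg) auto
  then have "breg (dual exact \<delta> yd (Suc n)) xb (primal exact \<delta> yd (Suc n)) \<le> \<sigma> * \<rho>\<^sup>2"
    using sum xb_breg by linarith
  then have "norm (primal exact \<delta> yd (Suc n) - xb) \<le> \<rho>"
    using norm_le_if_breg_le[OF dual_subdiff xb_dom] rho_pos by (simp add: norm_minus_commute)
  then show ?case
    using IH(1) sum invariant_Suc[OF xn xb_in_B xb_sol yd IH(3)] by (auto simp: le_Suc_eq)
qed

lemma primal_in_B:
  "norm (yd - y) \<le> \<delta> \<Longrightarrow> noise_dominated exact \<delta> yd n \<Longrightarrow> k \<le> n \<Longrightarrow> primal exact \<delta> yd k \<in> B"
  using iterates_near_xb in_B_if_near_xb by blast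

lemma invariant:
  assumes yd: "norm (yd - y) \<le> \<delta>" and nd: "noise_dominated exact \<delta> yd n"
    and xh: "xh \<in> B" "F xh = y" and "k \<le> n"
  shows "incr exact \<delta> yd k \<bullet> (primal exact \<delta> yd k - xh) \<le> gam exact \<delta> yd k"
  using \<open>k \<le> n\<close>
proof (induction k)
  case (Suc k)
  then show ?case using invariant_Suc[OF primal_in_B[OF yd nd] xh yd] by simp
qed (simp add: incr_0 state_0)

lemma breg_descent:
  assumes yd: "norm (yd - y) \<le> \<delta>" and nd: "noise_dominated exact \<delta> yd n"
    and xh: "xh \<in> B" "xh \<in> effdom R" "F xh = y" and "k < n"
  shows "breg (dual exact \<delta> yd (Suc k)) xh (primal exact \<delta> yd (Suc k))
    \<le> breg (dual exact \<delta> yd k) xh (primal exact \<delta> yd k) - c0 * (alpha exact \<delta> yd k * (norm (res exact \<delta> yd k))\<^sup>2)"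
  using breg_Suc_le_descent[OF primal_in_B[OF yd nd] xh yd invariant[OF yd nd xh(1,3)]] nd \<open>k < n\<close>
  unfolding noise_dominated_def by simp

lemma breg_antimono:
  assumes yd: "norm (yd - y) \<le> \<delta>" and nd: "noise_dominated exact \<delta> yd n"
    and xh: "xh \<in> B" "xh \<in> effdom R" "F xh = y" and "j \<le> k" "k \<le> n"
  shows "breg (dual exact \<delta> yd k) xh (primal exact \<delta> yd k) \<le> breg (dual exact \<delta> yd j) xh (primal exact \<delta> yd j)"
  using \<open>j \<le> k\<close> \<open>k \<le> n\<close>
proof (induction k rule: dec_induct)
  case (step i)
  have "0 \<le> c0 * (alpha exact \<delta> yd i * (norm (res exact \<delta> yd i))\<^sup>2)" using c0_pos alpha_nonneg by simp
  then show ?case using step breg_descent[OF yd nd xh, of i] by simp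
qed simp

section \<open>Exact data\<close>

abbreviation "x_e \<equiv> primal True 0 y"
abbreviation "xi_e \<equiv> dual True 0 y"
abbreviation "r_e \<equiv> res True 0 y"
abbreviation "g_e \<equiv> grd True 0 y"
abbreviation "a_e \<equiv> alpha True 0 y"
abbreviation "m_e \<equiv> incr True 0 y"
abbreviation "b_e \<equiv> mom True 0 y"

definition "f_e k = a_e k * (norm (r_e k))\<^sup>2"
definition "breg_e n = breg (xi_e n) xb (x_e n)"

lemma noise_dominated_exact: "noise_dominated True 0 y n"
  unfolding noise_dominated_def by simp

lemma x_e_in_B: "x_e n \<in> B"
  using primal_in_B[OF _ noise_dominated_exact order_refl] by simp

lemma f_e_nonneg: "0 \<le> f_e k"
  unfolding f_e_def using alpha_nonneg by simp

lemma breg_e_nonneg: "0 \<le> breg_e n"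
  unfolding breg_e_def using breg_primal_nonneg[OF xb_dom] .

lemma breg_e_sum_le: "breg_e n + c0 * (\<Sum>k<n. f_e k) \<le> breg \<xi>0 xb x0"
  using iterates_near_xb[OF _ noise_dominated_exact] unfolding breg_e_def f_e_def by simp

lemma breg_exact_antimono:
  "xh \<in> B \<Longrightarrow> xh \<in> effdom R \<Longrightarrow> F xh = y \<Longrightarrow> j \<le> k \<Longrightarrow>
    breg (xi_e k) xh (x_e k) \<le> breg (xi_e j) xh (x_e j)"
  using breg_antimono[OF _ noise_dominated_exact _ _ _ _ order_refl] by simp

lemma breg_e_antimono: "j \<le> k \<Longrightarrow> breg_e k \<le> breg_e j"
  unfolding breg_e_def using breg_exact_antimono[OF xb_in_B xb_dom xb_sol] .

lemma summable_f_e: "summable f_e"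
proof (rule summableI_nonneg_bounded)
  show "sum f_e {..<n} \<le> breg \<xi>0 xb x0 / c0" for n
    using breg_e_sum_le[of n] breg_e_nonneg[of n] c0_pos by (simp add: field_simps)
qed (rule f_e_nonneg)

lemma res_e_tendsto_0: "(\<lambda>n. norm (r_e n)) \<longlonglongrightarrow> 0"
proof -
  have "(norm (r_e n))\<^sup>2 \<le> f_e n / alpha_min" for n
  proof (cases "r_e n = 0")
    case False
    then have "alpha_min * (norm (r_e n))\<^sup>2 \<le> f_e n"
      using alpha_bounds(2)[OF x_e_in_B False] unfolding f_e_def by (simp add: mult_right_mono)
    then show ?thesis using alpha_min_pos by (simp add: field_simps)
  qed (use f_e_nonneg alpha_min_pos in simp)
  then have "summable (\<lambda>n. (norm (r_e n))\<^sup>2)"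
    by (intro summable_comparison_test[OF _ summable_divide[OF summable_f_e]]) auto
  then have "(\<lambda>n. sqrt ((norm (r_e n))\<^sup>2)) \<longlonglongrightarrow> sqrt 0"
    by (intro tendsto_real_sqrt summable_LIMSEQ_zero)
  then show ?thesis by simp
qed

lemma incr_e_tendsto_0: "(\<lambda>n. norm (m_e n)) \<longlonglongrightarrow> 0"
proof (rule linear_recursion_tendsto_zero[OF _ _ _ beta])
  fix n
  have "0 \<le> alpha_max" using alpha_nonneg alpha_le_max order_trans by blast
  have "norm (m_e (Suc n)) \<le> b_e n * norm (m_e n) + a_e n * norm (g_e n)"
    using norm_triangle_ineq4[of "b_e n *\<^sub>R m_e n" "a_e n *\<^sub>R g_e n"] mom_bounds(1) alpha_nonneg
    unfolding incr_Suc by simp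
  also have "\<dots> \<le> \<beta> * norm (m_e n) + alpha_max * (Lc * norm (r_e n))"
    using beta mom_bounds(2) norm_grd_le[OF x_e_in_B] alpha_nonneg alpha_le_max \<open>0 \<le> alpha_max\<close>
    by (intro add_mono mult_mono) auto
  finally show "norm (m_e (Suc n)) \<le> \<beta> * norm (m_e n) + alpha_max * Lc * norm (r_e n)"
    by (simp add: algebra_simps)
next
  show "(\<lambda>n. alpha_max * Lc * norm (r_e n)) \<longlonglongrightarrow> 0"
    using tendsto_mult_right_zero[OF res_e_tendsto_0] by simp
qed simp

text \<open>Where the residual is minimal on a window, the gradient steps of the window move \<open>\<xi>\<close> only
  little in the directions that matter; this replaces the monotonicity of the residual that
  the analysis of the plain Landweber method uses.\<close>

lemma step_inner_le:
  assumes le: "norm (r_e l) \<le> norm (r_e k)" and xh: "xh \<in> B" "F xh = y"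
  shows "a_e k * \<bar>g_e k \<bullet> (x_e l - xh)\<bar> \<le> 3 * (1 + \<eta>) * f_e k"
proof -
  have "norm (L (x_e k) (x_e l - x_e k)) \<le> (1 + \<eta>) * norm (r_e l - r_e k)"
    using norm_L_le_F_diff[OF x_e_in_B x_e_in_B] unfolding res_def by simp
  also have "\<dots> \<le> (1 + \<eta>) * (2 * norm (r_e k))"
    using norm_triangle_ineq4[of "r_e l" "r_e k"] le eta by (intro mult_left_mono) auto
  finally have 1: "norm (L (x_e k) (x_e l - x_e k)) \<le> (1 + \<eta>) * (2 * norm (r_e k))" .
  have "norm (L (x_e k) (x_e k - xh)) = norm (L (x_e k) (xh - x_e k))"
    by (metis blinfun.diff_right minus_diff_eq norm_minus_cancel)
  also have "\<dots> \<le> (1 + \<eta>) * norm (r_e k)"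
    using norm_L_le_F_diff[OF xh(1) x_e_in_B] xh(2) unfolding res_def by (simp add: norm_minus_commute)
  finally have 2: "norm (L (x_e k) (x_e k - xh)) \<le> (1 + \<eta>) * norm (r_e k)" .
  have "\<bar>g_e k \<bullet> (x_e l - xh)\<bar> = \<bar>L (x_e k) (x_e l - xh) \<bullet> r_e k\<bar>"
    unfolding grd_def by (simp add: inner_adjoint_blinfun[symmetric] inner_commute)
  also have "\<dots> \<le> norm (L (x_e k) (x_e l - xh)) * norm (r_e k)" by (rule Cauchy_Schwarz_ineq2)
  also have "\<dots> \<le> (3 * (1 + \<eta>) * norm (r_e k)) * norm (r_e k)"
  proof (rule mult_right_mono[OF _ norm_ge_zero])
    have "L (x_e k) (x_e l - xh) = L (x_e k) (x_e l - x_e k) + L (x_e k) (x_e k - xh)"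
      by (simp add: blinfun.diff_right)
    then have "norm (L (x_e k) (x_e l - xh))
        \<le> norm (L (x_e k) (x_e l - x_e k)) + norm (L (x_e k) (x_e k - xh))"
      by (simp only: norm_triangle_ineq)
    then have "norm (L (x_e k) (x_e l - xh)) \<le> (1 + \<eta>) * (2 * norm (r_e k)) + (1 + \<eta>) * norm (r_e k)"
      using 1 2 by linarith
    then show "norm (L (x_e k) (x_e l - xh)) \<le> 3 * (1 + \<eta>) * norm (r_e k)" by (simp add: algebra_simps)
  qed
  finally have "a_e k * \<bar>g_e k \<bullet> (x_e l - xh)\<bar> \<le> a_e k * (3 * (1 + \<eta>) * norm (r_e k) * norm (r_e k))"
    using alpha_nonneg by (rule mult_left_mono)
  then show ?thesis unfolding f_e_def by (simp add: power2_eq_square algebra_simps)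
qed

lemma incr_inner_recursion: "\<bar>m_e (Suc k) \<bullet> v\<bar> \<le> a_e k * \<bar>g_e k \<bullet> v\<bar> + \<beta> * \<bar>m_e k \<bullet> v\<bar>"
proof -
  have "\<bar>m_e (Suc k) \<bullet> v\<bar> \<le> b_e k * \<bar>m_e k \<bullet> v\<bar> + a_e k * \<bar>g_e k \<bullet> v\<bar>"
    using abs_triangle_ineq4[of "b_e k * (m_e k \<bullet> v)" "a_e k * (g_e k \<bullet> v)"] mom_bounds(1) alpha_nonneg
    unfolding incr_Suc by (simp add: inner_diff_left abs_mult)
  then show ?thesis using mom_bounds(2) mult_right_mono[of "b_e k" \<beta> "\<bar>m_e k \<bullet> v\<bar>"] by simp
qed

lemma dual_e_inner_le:
  assumes "n \<le> n'" and min: "\<And>k. n \<le> k \<Longrightarrow> k < n' \<Longrightarrow> norm (r_e l) \<le> norm (r_e k)"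
    and xh: "xh \<in> B" "F xh = y"
  shows "(1 - \<beta>) * \<bar>(xi_e n' - xi_e n) \<bullet> (x_e l - xh)\<bar>
    \<le> 3 * (1 + \<eta>) * (\<Sum>k = n..<n'. f_e k) + 4 * \<rho> * norm (m_e n)"
proof -
  define v where "v = x_e l - xh"
  obtain j where j: "n' = n + j" using \<open>n \<le> n'\<close> le_Suc_ex by blast
  have telescope: "xi_e n' - xi_e n = (\<Sum>k = n..<n'. m_e (Suc k))"
    unfolding incr_Suc_eq_diff using sum_Suc_diff'[OF \<open>n \<le> n'\<close>, of xi_e] by simp
  have "\<bar>(xi_e n' - xi_e n) \<bullet> v\<bar> \<le> (\<Sum>k = n..<n'. \<bar>m_e (Suc k) \<bullet> v\<bar>)"
    unfolding telescope inner_sum_left by (rule sum_abs)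
  then have "(1 - \<beta>) * \<bar>(xi_e n' - xi_e n) \<bullet> v\<bar> \<le> (1 - \<beta>) * (\<Sum>k = n..<n'. \<bar>m_e (Suc k) \<bullet> v\<bar>)"
    using beta by (intro mult_left_mono) auto
  moreover have "(1 - \<beta>) * (\<Sum>k = n..<n'. \<bar>m_e (Suc k) \<bullet> v\<bar>) + \<beta> * \<bar>m_e n' \<bullet> v\<bar>
      \<le> (\<Sum>k = n..<n'. a_e k * \<bar>g_e k \<bullet> v\<bar>) + \<beta> * \<bar>m_e n \<bullet> v\<bar>"
    unfolding j
    by (rule damped_recursion_sum_le[where M = "\<lambda>k. \<bar>m_e k \<bullet> v\<bar>" and A = "\<lambda>k. a_e k * \<bar>g_e k \<bullet> v\<bar>",
          OF incr_inner_recursion])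
  moreover have "(\<Sum>k = n..<n'. a_e k * \<bar>g_e k \<bullet> v\<bar>) \<le> 3 * (1 + \<eta>) * (\<Sum>k = n..<n'. f_e k)"
    unfolding sum_distrib_left v_def using step_inner_le[OF _ xh] min by (intro sum_mono) auto
  moreover have "\<beta> * \<bar>m_e n \<bullet> v\<bar> \<le> 4 * \<rho> * norm (m_e n)"
  proof -
    have "\<bar>m_e n \<bullet> v\<bar> \<le> norm (m_e n) * (4 * \<rho>)"
      using Cauchy_Schwarz_ineq2[of "m_e n" v] diam_B[OF x_e_in_B xh(1), of l] unfolding v_def
      by (meson mult_left_mono norm_ge_zero order_trans)
    then show ?thesis using beta mult_left_le_one_le[of "\<bar>m_e n \<bullet> v\<bar>" \<beta>] by (simp add: algebra_simps)
  qed
  moreover have "0 \<le> \<beta> * \<bar>m_e n' \<bullet> v\<bar>" using beta by simp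
  ultimately show ?thesis unfolding v_def[symmetric] by linarith
qed

definition "tail n = (3 * (1 + \<eta>) * (suminf f_e - sum f_e {..<n}) + 4 * \<rho> * norm (m_e n)) / (1 - \<beta>)"

lemma sum_f_e_le_tail: "n \<le> n' \<Longrightarrow> (\<Sum>k = n..<n'. f_e k) \<le> suminf f_e - sum f_e {..<n}"
  using sum.atLeastLessThan_concat[of 0 n n' f_e] sum_le_suminf[OF summable_f_e, of "{..<n'}"] f_e_nonneg
  by (simp add: lessThan_atLeast0)

lemma tail_nonneg: "0 \<le> tail n"
  unfolding tail_def using beta eta rho_pos sum_f_e_le_tail[of n n]
  by (intro divide_nonneg_nonneg add_nonneg_nonneg) auto

lemma tail_tendsto_0: "tail \<longlonglongrightarrow> 0"
proof -
  have "(\<lambda>n. suminf f_e - sum f_e {..<n}) \<longlonglongrightarrow> suminf f_e - suminf f_e"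
    by (intro tendsto_diff tendsto_const summable_LIMSEQ[OF summable_f_e])
  then have "tail \<longlonglongrightarrow> (3 * (1 + \<eta>) * 0 + 4 * \<rho> * 0) / (1 - \<beta>)"
    unfolding tail_def using beta by (intro tendsto_intros incr_e_tendsto_0) auto
  then show ?thesis by simp
qed

lemma dual_e_inner_le_tail:
  assumes "n \<le> n'" "\<And>k. n \<le> k \<Longrightarrow> k < n' \<Longrightarrow> norm (r_e l) \<le> norm (r_e k)" "xh \<in> B" "F xh = y"
  shows "\<bar>(xi_e n' - xi_e n) \<bullet> (x_e l - xh)\<bar> \<le> tail n"
proof -
  have "3 * (1 + \<eta>) * (\<Sum>k = n..<n'. f_e k) \<le> 3 * (1 + \<eta>) * (suminf f_e - sum f_e {..<n})"
    using sum_f_e_le_tail[OF assms(1)] eta by (intro mult_left_mono) auto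
  then show ?thesis
    using dual_e_inner_le[OF assms] beta unfolding tail_def by (simp add: field_simps)
qed

lemma breg_three_point:
  "breg (xi_e n) (x_e l) (x_e n) = breg_e n - breg_e l + (xi_e l - xi_e n) \<bullet> (x_e l - xb)"
  unfolding breg_def breg_e_def by (simp add: inner_diff_left inner_diff_right algebra_simps)

lemma breg_e_converges:
  obtains D where "breg_e \<longlonglongrightarrow> D" "\<And>n. D \<le> breg_e n"
proof -
  have "decseq breg_e" using breg_e_antimono by (simp add: decseq_def)
  then show thesis using decseq_convergent[of breg_e 0] breg_e_nonneg that by blast
qed

lemma residual_argmin_exists:
  assumes "n \<le> m"
  obtains l where "n \<le> l" "l \<le> m" "\<And>k. n \<le> k \<Longrightarrow> k \<le> m \<Longrightarrow> norm (r_e l) \<le> norm (r_e k)"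
proof -
  obtain l where "is_arg_min (\<lambda>k. norm (r_e k)) (\<lambda>k. k \<in> {n..m}) l"
    using ex_is_arg_min_if_finite[of "{n..m}" "\<lambda>k. norm (r_e k)"] assms by auto
  then show thesis using that unfolding is_arg_min_def by (auto simp: not_less)
qed

text \<open>Two iterates \<open>x_e n\<close>, \<open>x_e m\<close> are compared through \<open>x_e l\<close>, where \<open>l\<close> minimizes the
  residual on \<open>[n, m]\<close>.\<close>

lemma exists_index_near_both:
  assumes D: "\<And>i. D \<le> breg_e i" and "n \<le> m"
  obtains l where "\<sigma> * (norm (x_e l - x_e n))\<^sup>2 \<le> breg_e n - D + 2 * tail n"
    "\<sigma> * (norm (x_e l - x_e m))\<^sup>2 \<le> breg_e n - D + 2 * tail n"
proof -
  obtain l where l: "n \<le> l" "l \<le> m" "\<And>k. n \<le> k \<Longrightarrow> k \<le> m \<Longrightarrow> norm (r_e l) \<le> norm (r_e k)"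
    using residual_argmin_exists[OF \<open>n \<le> m\<close>] by blast
  have "\<bar>(xi_e l - xi_e n) \<bullet> (x_e l - xb)\<bar> \<le> tail n" "\<bar>(xi_e m - xi_e n) \<bullet> (x_e l - xb)\<bar> \<le> tail n"
    using dual_e_inner_le_tail[OF _ _ xb_in_B xb_sol] l by auto
  moreover have "(xi_e l - xi_e m) \<bullet> (x_e l - xb) = (xi_e l - xi_e n) \<bullet> (x_e l - xb) - (xi_e m - xi_e n) \<bullet> (x_e l - xb)"
    by (simp add: inner_diff_left)
  moreover have "\<sigma> * (norm (x_e l - x_e n))\<^sup>2 \<le> breg (xi_e n) (x_e l) (x_e n)"
    "\<sigma> * (norm (x_e l - x_e m))\<^sup>2 \<le> breg (xi_e m) (x_e l) (x_e m)"
    using breg_ge_norm_sq[OF dual_subdiff primal_in_effdom] by auto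
  moreover note breg_three_point[of n l] breg_three_point[of m l] breg_e_antimono[OF l(2)]
    D[of l] D[of n] tail_nonneg[of n]
  ultimately have "\<sigma> * (norm (x_e l - x_e n))\<^sup>2 \<le> breg_e n - D + 2 * tail n"
    "\<sigma> * (norm (x_e l - x_e m))\<^sup>2 \<le> breg_e n - D + 2 * tail n"
    unfolding abs_le_iff by linarith+
  then show thesis by (rule that)
qed

lemma Cauchy_x_e: "Cauchy x_e"
proof (rule metric_CauchyI)
  obtain D where D: "breg_e \<longlonglongrightarrow> D" "\<And>n. D \<le> breg_e n" using breg_e_converges by blast
  have "(\<lambda>n. breg_e n - D + 2 * tail n) \<longlonglongrightarrow> D - D + 2 * 0"
    by (intro tendsto_intros D(1) tail_tendsto_0)
  then have E: "(\<lambda>n. breg_e n - D + 2 * tail n) \<longlonglongrightarrow> 0" by simp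
  fix e :: real assume e: "e > 0"
  then have "\<forall>\<^sub>F n in sequentially. breg_e n - D + 2 * tail n < \<sigma> * (e / 2)\<^sup>2"
    using order_tendstoD(2)[OF E, of "\<sigma> * (e / 2)\<^sup>2"] sigma_pos by simp
  then obtain N where N: "\<And>n. n \<ge> N \<Longrightarrow> breg_e n - D + 2 * tail n < \<sigma> * (e / 2)\<^sup>2"
    unfolding eventually_sequentially by blast
  have close: "norm (x_e l - x_e k) < e / 2"
    if "\<sigma> * (norm (x_e l - x_e k))\<^sup>2 \<le> breg_e n - D + 2 * tail n" "n \<ge> N" for l k n
  proof -
    have "\<sigma> * (norm (x_e l - x_e k))\<^sup>2 < \<sigma> * (e / 2)\<^sup>2" using that N[of n] by linarith
    then have "(norm (x_e l - x_e k))\<^sup>2 < (e / 2)\<^sup>2" using sigma_pos by simp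
    then show ?thesis by (rule power_less_imp_less_base) (use e in simp)
  qed
  have main: "dist (x_e n) (x_e m) < e" if "N \<le> n" "n \<le> m" for n m
  proof -
    obtain l where "\<sigma> * (norm (x_e l - x_e n))\<^sup>2 \<le> breg_e n - D + 2 * tail n"
      "\<sigma> * (norm (x_e l - x_e m))\<^sup>2 \<le> breg_e n - D + 2 * tail n"
      using exists_index_near_both[OF D(2) \<open>n \<le> m\<close>] by blast
    then have "norm (x_e l - x_e n) < e / 2" "norm (x_e l - x_e m) < e / 2"
      using close \<open>N \<le> n\<close> by blast+
    then show ?thesis
      using norm_triangle_ineq[of "x_e n - x_e l" "x_e l - x_e m"] by (simp add: dist_norm norm_minus_commute)
  qed
  show "\<exists>M. \<forall>n\<ge>M. \<forall>m\<ge>M. dist (x_e n) (x_e m) < e"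
  proof (intro exI allI impI)
    fix n m assume "N \<le> n" "N \<le> m"
    then show "dist (x_e n) (x_e m) < e"
      using main[of n m] main[of m n] by (cases "n \<le> m") (auto simp: dist_commute)
  qed
qed

definition "x_lim = lim x_e"

lemma x_e_tendsto: "x_e \<longlonglongrightarrow> x_lim"
  unfolding x_lim_def using Cauchy_x_e Cauchy_convergent_iff convergent_LIMSEQ_iff by blast

lemma x_lim_in_B: "x_lim \<in> B"
proof -
  have "\<forall>k. x_e k \<in> cball xb \<rho>"
    using iterates_near_xb[OF _ noise_dominated_exact] by (auto simp: dist_norm norm_minus_commute)
  then have "x_lim \<in> cball xb \<rho>"
    using Lim_in_closed_set[OF closed_cball always_eventually _ x_e_tendsto] by simp
  then show ?thesis using in_B_if_near_xb[of x_lim] by (simp add: dist_norm norm_minus_commute)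
qed

lemma F_x_lim: "F x_lim = y"
proof -
  have "(\<lambda>n. F (x_e n)) \<longlonglongrightarrow> F x_lim"
    using continuous_on_tendsto_compose[OF continuous_on_F x_e_tendsto x_lim_in_B] x_e_in_B by simp
  moreover have "(\<lambda>n. r_e n + y) \<longlonglongrightarrow> 0 + y"
    using res_e_tendsto_0 by (intro tendsto_intros) (simp add: tendsto_norm_zero_iff)
  ultimately show ?thesis unfolding res_def using LIMSEQ_unique by fastforce
qed

lemma x_e_stationary:
  assumes "r_e k = 0" "k \<le> j"
  shows "x_e j = x_e k"
proof -
  have "F (x_e k) = y" using assms(1) unfolding res_def by simp
  then have "breg (xi_e j) (x_e k) (x_e j) \<le> breg (xi_e k) (x_e k) (x_e k)"
    using breg_exact_antimono[OF x_e_in_B primal_in_effdom] assms(2) by blast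
  moreover have "breg (xi_e k) (x_e k) (x_e k) = 0" unfolding breg_def by simp
  moreover have "\<sigma> * (norm (x_e k - x_e j))\<^sup>2 \<le> breg (xi_e j) (x_e k) (x_e j)"
    by (rule breg_ge_norm_sq[OF dual_subdiff primal_in_effdom])
  ultimately have "\<sigma> * (norm (x_e k - x_e j))\<^sup>2 \<le> 0" by linarith
  then show ?thesis using sigma_pos by (simp add: mult_le_0_iff)
qed

lemma x_lim_if_res_zero:
  assumes "r_e k = 0"
  shows "x_lim = x_e k"
proof -
  have "\<forall>\<^sub>F j in sequentially. x_e j = x_e k"
    using x_e_stationary[OF assms] unfolding eventually_sequentially by blast
  then show ?thesis using LIMSEQ_unique[OF x_e_tendsto tendsto_eventually] by blast
qed

text \<open>The minimizing indices escape to infinity because the residuals tend to zero without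
  vanishing.\<close>

lemma residual_argmin_sequence:
  assumes nz: "\<And>k. r_e k \<noteq> 0"
  obtains ls where "\<And>m. n \<le> ls m" "\<And>m k. n \<le> k \<Longrightarrow> k < ls m \<Longrightarrow> norm (r_e (ls m)) \<le> norm (r_e k)"
    "filterlim ls at_top sequentially"
proof -
  have "\<exists>l. n \<le> l \<and> l \<le> max n m \<and> (\<forall>k. n \<le> k \<longrightarrow> k \<le> max n m \<longrightarrow> norm (r_e l) \<le> norm (r_e k))" for m
    using residual_argmin_exists[of n "max n m"] by (metis max.cobounded1)
  then obtain ls where ls: "\<And>m. n \<le> ls m" "\<And>m. ls m \<le> max n m"
    "\<And>m k. n \<le> k \<Longrightarrow> k \<le> max n m \<Longrightarrow> norm (r_e (ls m)) \<le> norm (r_e k)"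
    by metis
  have "\<forall>\<^sub>F m in sequentially. K \<le> ls m" for K
  proof -
    define \<mu> where "\<mu> = Min ((\<lambda>k. norm (r_e k)) ` {n..max K n})"
    have \<mu>: "0 < \<mu>" "\<And>k. n \<le> k \<Longrightarrow> k \<le> max K n \<Longrightarrow> \<mu> \<le> norm (r_e k)"
      using nz unfolding \<mu>_def by (auto simp: Min_gr_iff)
    obtain N where N: "\<And>m. m \<ge> N \<Longrightarrow> norm (r_e m) < \<mu>"
      using order_tendstoD(2)[OF res_e_tendsto_0 \<mu>(1)] unfolding eventually_sequentially by blast
    have "K \<le> ls m" if "m \<ge> max N (max K n)" for m
    proof -
      have "norm (r_e (ls m)) < \<mu>" using ls(3)[of m m] N[of m] that by fastforce
      then show ?thesis using \<mu>(2)[of "ls m"] ls(1)[of m] by fastforce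
    qed
    then show ?thesis unfolding eventually_sequentially by blast
  qed
  then have "filterlim ls at_top sequentially" by (simp add: filterlim_at_top)
  moreover have "norm (r_e (ls m)) \<le> norm (r_e k)" if "n \<le> k" "k < ls m" for m k
    using ls(2)[of m] ls(3)[of k m] that by simp
  ultimately show thesis using that ls(1) by blast
qed

lemma breg_x_lim_le:
  assumes nz: "\<And>k. r_e k \<noteq> 0" and D: "\<And>i. D \<le> breg_e i"
  shows "x_lim \<in> effdom R" "breg (xi_e n) x_lim (x_e n) \<le> breg_e n - D + tail n"
proof -
  obtain ls where ls: "\<And>m. n \<le> ls m" "\<And>m k. n \<le> k \<Longrightarrow> k < ls m \<Longrightarrow> norm (r_e (ls m)) \<le> norm (r_e k)"
    "filterlim ls at_top sequentially"
    using residual_argmin_sequence[OF nz] by blast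
  define c where "c m = Rreal (x_e n) + xi_e n \<bullet> (x_e (ls m) - x_e n) + (breg_e n - D + tail n)" for m
  have lim: "(\<lambda>m. x_e (ls m)) \<longlonglongrightarrow> x_lim" using filterlim_compose[OF x_e_tendsto ls(3)] .
  have le: "Rreal (x_e (ls m)) \<le> c m" for m
  proof -
    have "\<bar>(xi_e (ls m) - xi_e n) \<bullet> (x_e (ls m) - xb)\<bar> \<le> tail n"
      using dual_e_inner_le_tail[OF ls(1) ls(2) xb_in_B xb_sol] by blast
    then have "breg (xi_e n) (x_e (ls m)) (x_e n) \<le> breg_e n - D + tail n"
      using breg_three_point[of n "ls m"] D[of "ls m"] by (simp add: abs_le_iff)
    then show ?thesis unfolding c_def breg_def by simp
  qed
  have "c \<longlonglongrightarrow> Rreal (x_e n) + xi_e n \<bullet> (x_lim - x_e n) + (breg_e n - D + tail n)"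
    unfolding c_def by (intro tendsto_intros lim)
  note lsc_limit_le[OF lim primal_in_effdom le this]
  then have "x_lim \<in> effdom R" "Rreal x_lim \<le> Rreal (x_e n) + xi_e n \<bullet> (x_lim - x_e n) + (breg_e n - D + tail n)"
    by auto
  then show "x_lim \<in> effdom R" "breg (xi_e n) x_lim (x_e n) \<le> breg_e n - D + tail n"
    unfolding breg_def by simp_all
qed

lemma exact_data_convergence:
  "x_lim \<in> effdom R \<and> (\<lambda>n. breg (xi_e n) x_lim (x_e n)) \<longlonglongrightarrow> 0"
proof (cases "\<exists>k. r_e k = 0")
  case True
  then obtain k where k: "r_e k = 0" by blast
  have "breg (xi_e n) x_lim (x_e n) = 0" if "n \<ge> k" for n
    using x_lim_if_res_zero[OF k] x_e_stationary[OF k that] unfolding breg_def by simp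
  then have "\<forall>\<^sub>F n in sequentially. breg (xi_e n) x_lim (x_e n) = 0"
    unfolding eventually_sequentially by blast
  then have "(\<lambda>n. breg (xi_e n) x_lim (x_e n)) \<longlonglongrightarrow> 0" by (rule tendsto_eventually)
  moreover have "x_lim \<in> effdom R" using x_lim_if_res_zero[OF k] primal_in_effdom by simp
  ultimately show ?thesis by blast
next
  case False
  then have nz: "\<And>k. r_e k \<noteq> 0" by blast
  obtain D where D: "breg_e \<longlonglongrightarrow> D" "\<And>i. D \<le> breg_e i" using breg_e_converges by blast
  note dom = breg_x_lim_le(1)[OF nz D(2)]
  have "(\<lambda>n. breg_e n - D + tail n) \<longlonglongrightarrow> D - D + 0"
    by (intro tendsto_intros D(1) tail_tendsto_0)
  then have upper: "(\<lambda>n. breg_e n - D + tail n) \<longlonglongrightarrow> 0" by simp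
  have "(\<lambda>n. breg (xi_e n) x_lim (x_e n)) \<longlonglongrightarrow> 0"
    by (rule tendsto_sandwich[OF _ _ tendsto_const upper])
      (simp_all add: breg_primal_nonneg[OF dom] breg_x_lim_le(2)[OF nz D(2)])
  then show ?thesis using dom by blast
qed

section \<open>Noisy data and the discrepancy principle\<close>

lemma noise_dominated_before_stop:
  assumes "0 \<le> \<delta>" and "\<And>k. k < n \<Longrightarrow> \<tau> * \<delta> < norm (res False \<delta> yd k)"
  shows "noise_dominated False \<delta> yd n"
  unfolding noise_dominated_def
proof (intro allI impI)
  fix k assume "k < n"
  with assms have "\<tau> * \<delta> * norm (res False \<delta> yd k) \<le> norm (res False \<delta> yd k) * norm (res False \<delta> yd k)"
    using tau by (intro mult_right_mono) (auto simp: less_imp_le)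
  then show "\<tau> * \<delta> * norm (res False \<delta> yd k) \<le> (norm (res False \<delta> yd k))\<^sup>2"
    by (simp add: power2_eq_square)
qed

text \<open>Each step with residual above \<open>\<tau>\<delta>\<close> decreases the Bregman distance to \<open>xb\<close> by at least
  \<open>c0 \<alpha>\<^sub>m\<^sub>i\<^sub>n (\<tau>\<delta>)\<^sup>2\<close>, so the discrepancy principle stops after finitely many steps.\<close>

lemma stop_exists:
  assumes \<delta>: "\<delta> > 0" and yd: "norm (yd - y) \<le> \<delta>"
  shows "\<exists>n. norm (res False \<delta> yd n) \<le> \<tau> * \<delta>"
proof (rule ccontr)
  assume "\<not> ?thesis"
  then have above: "\<And>n. \<tau> * \<delta> < norm (res False \<delta> yd n)" by (simp add: not_le)
  define q where "q = c0 * (alpha_min * (\<tau> * \<delta>)\<^sup>2)"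
  have q: "q > 0" unfolding q_def using c0_pos alpha_min_pos \<delta> tau by simp
  obtain n :: nat where n: "breg \<xi>0 xb x0 / q < real n" using reals_Archimedean2 by blast
  have nd: "noise_dominated False \<delta> yd n" using noise_dominated_before_stop above \<delta> by simp
  have "alpha_min * (\<tau> * \<delta>)\<^sup>2 \<le> alpha False \<delta> yd k * (norm (res False \<delta> yd k))\<^sup>2" if "k < n" for k
  proof -
    have "0 < \<tau> * \<delta>" using \<delta> tau by simp
    then have "res False \<delta> yd k \<noteq> 0" using above[of k] by auto
    then have "alpha_min \<le> alpha False \<delta> yd k"
      using alpha_bounds(2)[OF primal_in_B[OF yd nd]] that by simp
    moreover have "(\<tau> * \<delta>)\<^sup>2 \<le> (norm (res False \<delta> yd k))\<^sup>2"
      using above[of k] \<delta> tau by (intro power_mono) auto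
    ultimately show ?thesis using alpha_min_pos by (intro mult_mono) auto
  qed
  then have "real n * q \<le> c0 * (\<Sum>k<n. alpha False \<delta> yd k * (norm (res False \<delta> yd k))\<^sup>2)"
    using sum_mono[of "{..<n}" "\<lambda>_. alpha_min * (\<tau> * \<delta>)\<^sup>2"] c0_pos unfolding q_def
    by (simp add: mult_left_mono algebra_simps)
  also have "\<dots> \<le> breg \<xi>0 xb x0"
    using iterates_near_xb[OF yd nd] breg_primal_nonneg[OF xb_dom, of False \<delta> yd n] by linarith
  finally show False using n q by (simp add: field_simps)
qed

definition "stop \<delta> yd = (LEAST n. norm (res False \<delta> yd n) \<le> \<tau> * \<delta>)"

lemma stop_index_eq_stop: "stop_index R F L Lc \<eta> \<sigma> \<beta> \<mu>0 \<mu>1 adaptive \<xi>0 \<tau> \<delta> yd = stop \<delta> yd"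
  unfolding stop_index_def stop_def iter_x_eq_primal res_def ..

lemma stop_props:
  assumes "\<delta> > 0" and yd: "norm (yd - y) \<le> \<delta>"
  shows "norm (res False \<delta> yd (stop \<delta> yd)) \<le> \<tau> * \<delta>"
    and "noise_dominated False \<delta> yd (stop \<delta> yd)"
proof -
  show "norm (res False \<delta> yd (stop \<delta> yd)) \<le> \<tau> * \<delta>"
    unfolding stop_def using LeastI_ex[OF stop_exists[OF assms]] .
  have "\<tau> * \<delta> < norm (res False \<delta> yd k)" if "k < stop \<delta> yd" for k
    using not_less_Least[OF that[unfolded stop_def]] by simp
  then show "noise_dominated False \<delta> yd (stop \<delta> yd)"
    using noise_dominated_before_stop \<open>\<delta> > 0\<close> by simp
qed

lemma grd_e_eq_0_imp:
  assumes "g_e n = 0"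
  shows "r_e n = 0"
proof -
  have "(1 - \<eta>) * (norm (r_e n))\<^sup>2 \<le> 0"
    using inner_adjoint_residual_ge[OF x_e_in_B[of n] xb_in_B xb_sol, of y 0] assms
    unfolding grd_def res_def by simp
  then show ?thesis using eta by (simp add: mult_le_0_iff)
qed

text \<open>For exact data a vanishing increment can only come from a vanishing residual: otherwise
  \<open>\<alpha>\<^sub>k g\<^sub>k = \<beta>\<^sub>k m\<^sub>k\<close> with \<open>\<beta>\<^sub>k > 0\<close>, and the choice of \<open>\<beta>\<^sub>k\<close> together with the invariant would
  force \<open>\<langle>g\<^sub>k, x\<^sub>k - xb\<rangle> \<le> 0\<close>, contradicting the tangential cone condition.\<close>

lemma res_e_eq_0_if_incr_Suc_eq_0:
  assumes m0: "m_e (Suc k) = 0"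
  shows "r_e k = 0"
proof (rule ccontr)
  assume r: "r_e k \<noteq> 0"
  have eq: "a_e k *\<^sub>R g_e k = b_e k *\<^sub>R m_e k" using m0 unfolding incr_Suc by simp
  have a: "a_e k > 0" using alpha_bounds(2)[OF x_e_in_B r] alpha_min_pos by linarith
  have g: "g_e k \<noteq> 0" using grd_e_eq_0_imp r by blast
  then have "b_e k \<noteq> 0" using eq a by auto
  then have b: "b_e k > 0" using mom_bounds(1)[of True 0 y k] by linarith
  have "a_e k * (g_e k \<bullet> m_e k) = b_e k * (norm (m_e k))\<^sup>2"
    using arg_cong[OF eq, of "\<lambda>v. v \<bullet> m_e k"] by (simp add: power2_norm_eq_inner)
  then have gam: "gam True 0 y k \<le> 0"
    using mom_bounds(4)[OF b] sigma_pos by (simp add: mult_le_0_iff)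
  have "0 < (1 - \<eta>) * (norm (r_e k))\<^sup>2" using r eta by simp
  also have "\<dots> \<le> (x_e k - xb) \<bullet> g_e k"
    using inner_adjoint_residual_ge[OF x_e_in_B xb_in_B xb_sol, of y 0] unfolding grd_def res_def by simp
  finally have "0 < (a_e k / b_e k) * ((x_e k - xb) \<bullet> g_e k)" using a b by simp
  also have "\<dots> = m_e k \<bullet> (x_e k - xb)"
  proof -
    have "m_e k = (a_e k / b_e k) *\<^sub>R g_e k"
      using arg_cong[OF eq, of "\<lambda>v. (1 / b_e k) *\<^sub>R v"] b by simp
    then show ?thesis by (simp add: inner_commute)
  qed
  also have "\<dots> \<le> gam True 0 y k"
    using invariant[OF _ noise_dominated_exact xb_in_B xb_sol order_refl] by simp
  finally show False using gam by simp
qed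

lemma gam_e_eq_0_if_incr_eq_0:
  assumes "m_e n = 0"
  shows "gam True 0 y n = 0"
proof (cases n)
  case (Suc k)
  have r: "r_e k = 0" using res_e_eq_0_if_incr_Suc_eq_0 assms unfolding Suc .
  then have "g_e k = 0" using norm_grd_le[OF x_e_in_B, of k] by simp
  then have "b_e k * gam True 0 y k = 0"
    using assms mom_bounds(3) unfolding Suc incr_Suc by auto
  then show ?thesis
    using assms r unfolding Suc state_Suc(3) incr_Suc_eq_diff[symmetric] by simp
qed (simp add: state_0)

end

section \<open>Stability\<close>

text \<open>Stability: along a sequence of data \<open>y\<^sup>\<delta>\<^sup>l \<rightarrow> y\<close>, the first \<open>n\<close> noisy iterates converge to the
  exact ones, where the limit is taken over those \<open>l\<close> whose stopping index is at least \<open>n\<close>.\<close>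

locale noisy_data_sequence = momentum_landweber R \<sigma> x0 \<xi>0 F L \<rho> \<eta> Lc y xb \<beta> \<mu>0 \<mu>1 \<tau> adaptive
  for R :: "'a::{real_inner,complete_space} \<Rightarrow> ereal" and \<sigma> x0 \<xi>0
    and F :: "'a \<Rightarrow> 'b::{real_inner,complete_space}" and L \<rho> \<eta> Lc y xb \<beta> \<mu>0 \<mu>1 \<tau> adaptive +
  fixes ds :: "nat \<Rightarrow> real" and yds :: "nat \<Rightarrow> 'b"
  assumes ds_pos: "\<And>l. ds l > 0" and ds_lim: "ds \<longlonglongrightarrow> 0" and yds_close: "\<And>l. norm (yds l - y) \<le> ds l"
begin

abbreviation "xi_d n l \<equiv> dual False (ds l) (yds l) n"
abbreviation "xp_d n l \<equiv> dual_prev False (ds l) (yds l) n"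
abbreviation "gam_d n l \<equiv> gam False (ds l) (yds l) n"
abbreviation "x_d n l \<equiv> primal False (ds l) (yds l) n"
abbreviation "r_d n l \<equiv> res False (ds l) (yds l) n"
abbreviation "g_d n l \<equiv> grd False (ds l) (yds l) n"
abbreviation "a_d n l \<equiv> alpha False (ds l) (yds l) n"
abbreviation "m_d n l \<equiv> incr False (ds l) (yds l) n"
abbreviation "b_d n l \<equiv> mom False (ds l) (yds l) n"
abbreviation "xp_e \<equiv> dual_prev True 0 y"
abbreviation "gam_e \<equiv> gam True 0 y"

definition "nd l = stop (ds l) (yds l)"
definition "after n = inf sequentially (principal {l. n \<le> nd l})"

lemma after_Suc_le: "after (Suc n) \<le> after n"
  unfolding after_def by (intro inf_mono order_refl) auto

lemma after_le_sequentially: "after n \<le> sequentially"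
  unfolding after_def by simp

lemma eventually_after_iff: "eventually P (after n) \<longleftrightarrow> (\<forall>\<^sub>F l in sequentially. n \<le> nd l \<longrightarrow> P l)"
  unfolding after_def eventually_inf_principal by simp

lemma ds_tendsto_after: "(ds \<longlongrightarrow> 0) (after n)"
  using tendsto_mono[OF after_le_sequentially ds_lim] .

lemma yds_tendsto_after: "(yds \<longlongrightarrow> y) (after n)"
proof -
  have "(\<lambda>l. yds l - y) \<longlonglongrightarrow> 0"
    by (rule Lim_null_comparison[OF always_eventually ds_lim]) (simp add: yds_close)
  then show ?thesis using tendsto_mono[OF after_le_sequentially] by (simp add: LIM_zero_iff)
qed

lemma x_d_in_B_after: "k \<le> n \<Longrightarrow> \<forall>\<^sub>F l in after n. x_d k l \<in> B"
  unfolding eventually_after_iff nd_def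
  using primal_in_B[OF yds_close stop_props(2)[OF ds_pos yds_close]] by simp

lemma alpha_tendsto:
  assumes "\<not> (adaptive \<and> r_e n = 0)"
    and r: "((\<lambda>l. r_d n l) \<longlongrightarrow> r_e n) \<Phi>" and g: "((\<lambda>l. g_d n l) \<longlongrightarrow> g_e n) \<Phi>"
  shows "((\<lambda>l. a_d n l) \<longlongrightarrow> a_e n) \<Phi>"
proof (cases adaptive)
  case True
  with assms(1) have "g_e n \<noteq> 0" using grd_e_eq_0_imp by blast
  then have pos: "0 < norm (g_e n)" by simp
  have a: "a_e n = min (\<mu>0 * (norm (r_e n))\<^sup>2 / (norm (g_e n))\<^sup>2) \<mu>1"
    unfolding alpha_def stepsize_def using True assms(1) \<open>g_e n \<noteq> 0\<close> by simp
  have "\<forall>\<^sub>F l in \<Phi>. min (\<mu>0 * (norm (r_d n l))\<^sup>2 / (norm (g_d n l))\<^sup>2) \<mu>1 = a_d n l"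
    using order_tendstoD(1)[OF tendsto_norm[OF g] pos] unfolding alpha_def
    by eventually_elim (simp add: stepsize_def True)
  moreover have "((\<lambda>l. min (\<mu>0 * (norm (r_d n l))\<^sup>2 / (norm (g_d n l))\<^sup>2) \<mu>1) \<longlongrightarrow> a_e n) \<Phi>"
    unfolding a using pos by (intro tendsto_intros r g) auto
  ultimately show ?thesis by (rule Lim_transform_eventually[rotated])
qed (unfold alpha_def stepsize_def, simp)

lemma alpha_products_tendsto:
  assumes r: "((\<lambda>l. r_d n l) \<longlongrightarrow> r_e n) \<Phi>" and g: "((\<lambda>l. g_d n l) \<longlongrightarrow> g_e n) \<Phi>"
  shows "((\<lambda>l. a_d n l *\<^sub>R g_d n l) \<longlongrightarrow> a_e n *\<^sub>R g_e n) \<Phi>"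
    and "((\<lambda>l. a_d n l * norm (r_d n l)) \<longlongrightarrow> a_e n * norm (r_e n)) \<Phi>"
proof -
  have "((\<lambda>l. a_d n l *\<^sub>R g_d n l) \<longlongrightarrow> a_e n *\<^sub>R g_e n) \<Phi> \<and>
    ((\<lambda>l. a_d n l * norm (r_d n l)) \<longlongrightarrow> a_e n * norm (r_e n)) \<Phi>"
  proof (cases "adaptive \<and> r_e n = 0")
    case True
    text \<open>Here the exact step size is \<open>0\<close> by convention, but the noisy ones need not converge to it;
      the products still do, since \<open>\<alpha>\<close> is bounded.\<close>
    then have r0: "r_e n = 0" and a0: "a_e n = 0" unfolding alpha_def stepsize_def by auto
    then have g0: "g_e n = 0" using norm_grd_le[OF x_e_in_B, of n] by simp
    have bounded: "\<bar>a_d n l\<bar> \<le> alpha_max" for l using alpha_nonneg alpha_le_max by simp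
    have "((\<lambda>l. norm (r_d n l)) \<longlongrightarrow> 0) \<Phi>" "((\<lambda>l. g_d n l) \<longlongrightarrow> 0) \<Phi>"
      using tendsto_norm[OF r] r0 g g0 by simp_all
    from this[THEN tendsto_bounded_scaleR_zero[where c = "\<lambda>l. a_d n l", OF bounded]]
    show ?thesis using a0 g0 by simp
  next
    case False
    then show ?thesis by (intro conjI tendsto_intros alpha_tendsto r g)
  qed
  then show "((\<lambda>l. a_d n l *\<^sub>R g_d n l) \<longlongrightarrow> a_e n *\<^sub>R g_e n) \<Phi>"
    "((\<lambda>l. a_d n l * norm (r_d n l)) \<longlongrightarrow> a_e n * norm (r_e n)) \<Phi>" by blast+
qed

lemma mom_tendsto:
  assumes "m_e n \<noteq> 0" and ag: "((\<lambda>l. a_d n l *\<^sub>R g_d n l) \<longlongrightarrow> a_e n *\<^sub>R g_e n) \<Phi>"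
    and m: "((\<lambda>l. m_d n l) \<longlongrightarrow> m_e n) \<Phi>" and gam: "((\<lambda>l. gam_d n l) \<longlongrightarrow> gam_e n) \<Phi>"
  shows "((\<lambda>l. b_d n l) \<longlongrightarrow> b_e n) \<Phi>"
proof -
  have pos: "0 < norm (m_e n)" using assms(1) by simp
  define h where "h a g m \<gamma> = min (max 0 (((a *\<^sub>R g) \<bullet> m - 2 * \<sigma> * \<gamma>) / (norm m)\<^sup>2)) \<beta>"
    for a :: real and g m :: 'a and \<gamma> :: real
  have "\<forall>\<^sub>F l in \<Phi>. h (a_d n l) (g_d n l) (m_d n l) (gam_d n l) = b_d n l"
    using order_tendstoD(1)[OF tendsto_norm[OF m] pos]
    by eventually_elim (auto simp: h_def mom_def momentum_def)
  moreover have "((\<lambda>l. h (a_d n l) (g_d n l) (m_d n l) (gam_d n l)) \<longlongrightarrow> h (a_e n) (g_e n) (m_e n) (gam_e n)) \<Phi>"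
    unfolding h_def using pos
    by (intro tendsto_min tendsto_max tendsto_const tendsto_divide tendsto_diff tendsto_inner
        tendsto_mult tendsto_power tendsto_norm ag m gam) auto
  then have "((\<lambda>l. h (a_d n l) (g_d n l) (m_d n l) (gam_d n l)) \<longlongrightarrow> b_e n) \<Phi>"
    using assms(1) unfolding h_def mom_def momentum_def by simp
  ultimately show ?thesis by (rule Lim_transform_eventually[rotated])
qed

lemma mom_products_tendsto:
  assumes ag: "((\<lambda>l. a_d n l *\<^sub>R g_d n l) \<longlongrightarrow> a_e n *\<^sub>R g_e n) \<Phi>"
    and m: "((\<lambda>l. m_d n l) \<longlongrightarrow> m_e n) \<Phi>" and gam: "((\<lambda>l. gam_d n l) \<longlongrightarrow> gam_e n) \<Phi>"
  shows "((\<lambda>l. b_d n l *\<^sub>R m_d n l) \<longlongrightarrow> b_e n *\<^sub>R m_e n) \<Phi>"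
    and "((\<lambda>l. b_d n l * gam_d n l) \<longlongrightarrow> b_e n * gam_e n) \<Phi>"
proof -
  have "((\<lambda>l. b_d n l *\<^sub>R m_d n l) \<longlongrightarrow> b_e n *\<^sub>R m_e n) \<Phi> \<and>
    ((\<lambda>l. b_d n l * gam_d n l) \<longlongrightarrow> b_e n * gam_e n) \<Phi>"
  proof (cases "m_e n = 0")
    case True
    then have b0: "b_e n = 0" and gam0: "gam_e n = 0"
      using mom_bounds(3) gam_e_eq_0_if_incr_eq_0 by auto
    have bounded: "\<bar>b_d n l\<bar> \<le> \<beta>" for l using mom_bounds(1,2) by simp
    have "((\<lambda>l. m_d n l) \<longlongrightarrow> 0) \<Phi>" "((\<lambda>l. gam_d n l) \<longlongrightarrow> 0) \<Phi>"
      using m gam True gam0 by simp_all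
    from this[THEN tendsto_bounded_scaleR_zero[where c = "\<lambda>l. b_d n l", OF bounded]]
    show ?thesis using b0 by simp
  next
    case False
    then show ?thesis by (intro conjI tendsto_intros mom_tendsto ag m gam)
  qed
  then show "((\<lambda>l. b_d n l *\<^sub>R m_d n l) \<longlongrightarrow> b_e n *\<^sub>R m_e n) \<Phi>"
    "((\<lambda>l. b_d n l * gam_d n l) \<longlongrightarrow> b_e n * gam_e n) \<Phi>" by blast+
qed

lemma state_step_tendsto:
  assumes xi: "((\<lambda>l. xi_d n l) \<longlongrightarrow> xi_e n) \<Phi>" and xp: "((\<lambda>l. xp_d n l) \<longlongrightarrow> xp_e n) \<Phi>"
    and gam: "((\<lambda>l. gam_d n l) \<longlongrightarrow> gam_e n) \<Phi>"
    and ds: "(ds \<longlongrightarrow> 0) \<Phi>" and yds: "(yds \<longlongrightarrow> y) \<Phi>" and in_B: "\<forall>\<^sub>F l in \<Phi>. x_d n l \<in> B"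
  shows "((\<lambda>l. xi_d (Suc n) l) \<longlongrightarrow> xi_e (Suc n)) \<Phi>" "((\<lambda>l. xp_d (Suc n) l) \<longlongrightarrow> xp_e (Suc n)) \<Phi>"
    "((\<lambda>l. gam_d (Suc n) l) \<longlongrightarrow> gam_e (Suc n)) \<Phi>"
proof -
  have x: "((\<lambda>l. x_d n l) \<longlongrightarrow> x_e n) \<Phi>" unfolding primal_def using gradRstar_tendsto[OF xi] .
  have r: "((\<lambda>l. r_d n l) \<longlongrightarrow> r_e n) \<Phi>"
    unfolding res_def using continuous_on_tendsto_compose[OF continuous_on_F x x_e_in_B in_B] yds
    by (intro tendsto_diff)
  have "((\<lambda>l. L (x_d n l)) \<longlongrightarrow> L (x_e n)) \<Phi>"
    using continuous_on_tendsto_compose[OF L_cont x x_e_in_B in_B] .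
  then have "((\<lambda>l. norm (L (x_d n l) - L (x_e n)) * norm (r_d n l) + norm (L (x_e n)) * norm (r_d n l - r_e n))
      \<longlongrightarrow> 0 * norm (r_e n) + norm (L (x_e n)) * 0) \<Phi>"
    using r by (intro tendsto_intros) (simp_all add: tendsto_norm_zero_iff LIM_zero_iff)
  then have bound: "((\<lambda>l. norm (L (x_d n l) - L (x_e n)) * norm (r_d n l)
      + norm (L (x_e n)) * norm (r_d n l - r_e n)) \<longlongrightarrow> 0) \<Phi>" by simp
  have "((\<lambda>l. g_d n l - g_e n) \<longlongrightarrow> 0) \<Phi>"
    by (rule Lim_null_comparison[OF always_eventually bound])
      (simp add: grd_def norm_adjoint_blinfun_diff_le)
  then have g: "((\<lambda>l. g_d n l) \<longlongrightarrow> g_e n) \<Phi>" by (simp add: LIM_zero_iff)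
  have m: "((\<lambda>l. m_d n l) \<longlongrightarrow> m_e n) \<Phi>" unfolding incr_def by (intro tendsto_diff xi xp)
  note ag = alpha_products_tendsto[OF r g] and bm = mom_products_tendsto[OF alpha_products_tendsto(1)[OF r g] m gam]
  show xi': "((\<lambda>l. xi_d (Suc n) l) \<longlongrightarrow> xi_e (Suc n)) \<Phi>"
    unfolding state_Suc(2) by (intro tendsto_intros xi ag bm)
  show "((\<lambda>l. xp_d (Suc n) l) \<longlongrightarrow> xp_e (Suc n)) \<Phi>" unfolding state_Suc(1) by (rule xi)
  have x': "((\<lambda>l. x_d (Suc n) l) \<longlongrightarrow> x_e (Suc n)) \<Phi>" unfolding primal_def using gradRstar_tendsto[OF xi'] .
  have "gam_d (Suc n) l = (xi_d (Suc n) l - xi_d n l) \<bullet> (x_d (Suc n) l - x_d n l)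
      - (1 - \<eta>) * (a_d n l * norm (r_d n l)) * norm (r_d n l) + (1 + \<eta>) * (a_d n l * norm (r_d n l)) * ds l
      + b_d n l * gam_d n l" for l
    unfolding state_Suc(3) by (simp add: power2_eq_square algebra_simps)
  moreover have "gam_e (Suc n) = (xi_e (Suc n) - xi_e n) \<bullet> (x_e (Suc n) - x_e n)
      - (1 - \<eta>) * (a_e n * norm (r_e n)) * norm (r_e n) + (1 + \<eta>) * (a_e n * norm (r_e n)) * 0
      + b_e n * gam_e n"
    unfolding state_Suc(3) by (simp add: power2_eq_square algebra_simps)
  ultimately show "((\<lambda>l. gam_d (Suc n) l) \<longlongrightarrow> gam_e (Suc n)) \<Phi>"
    by (simp only:) (intro tendsto_intros xi xi' x x' r ag bm ds)
qed

lemma state_tendsto: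
  "((\<lambda>l. xi_d n l) \<longlongrightarrow> xi_e n) (after n) \<and> ((\<lambda>l. xp_d n l) \<longlongrightarrow> xp_e n) (after n)
    \<and> ((\<lambda>l. gam_d n l) \<longlongrightarrow> gam_e n) (after n)"
proof (induction n)
  case (Suc n)
  then have "((\<lambda>l. xi_d n l) \<longlongrightarrow> xi_e n) (after (Suc n))" "((\<lambda>l. xp_d n l) \<longlongrightarrow> xp_e n) (after (Suc n))"
    "((\<lambda>l. gam_d n l) \<longlongrightarrow> gam_e n) (after (Suc n))"
    using tendsto_mono[OF after_Suc_le] by blast+
  from state_step_tendsto[OF this ds_tendsto_after yds_tendsto_after x_d_in_B_after[of n "Suc n"]]
  show ?case by simp
qed (simp add: state_0)

lemma breg_d_tendsto:
  "z \<in> effdom R \<Longrightarrow> ((\<lambda>l. breg (xi_d n l) z (x_d n l)) \<longlongrightarrow> breg (xi_e n) z (x_e n)) (after n)"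
  unfolding primal_def using breg_gradRstar_tendsto state_tendsto by blast

lemma res_d_tendsto: "((\<lambda>l. r_d n l) \<longlongrightarrow> r_e n) (after n)"
proof -
  have "((\<lambda>l. x_d n l) \<longlongrightarrow> x_e n) (after n)"
    unfolding primal_def using gradRstar_tendsto state_tendsto by blast
  then show ?thesis
    unfolding res_def using continuous_on_tendsto_compose[OF continuous_on_F _ x_e_in_B x_d_in_B_after]
    by (intro tendsto_diff yds_tendsto_after) auto
qed

lemma eventually_stop_eq_imp_breg_small:
  assumes "\<epsilon> > 0"
  shows "\<forall>\<^sub>F l in sequentially. nd l = n \<longrightarrow> breg (xi_d n l) x_lim (x_d n l) < \<epsilon>"
proof (cases "r_e n = 0")
  case True
  then have "breg (xi_e n) x_lim (x_e n) = 0" using x_lim_if_res_zero unfolding breg_def by simp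
  then have "\<forall>\<^sub>F l in after n. breg (xi_d n l) x_lim (x_d n l) < \<epsilon>"
    using order_tendstoD(2)[OF breg_d_tendsto[OF conjunct1[OF exact_data_convergence]]] assms by simp
  then show ?thesis unfolding eventually_after_iff by (rule eventually_mono) auto
next
  case False
  text \<open>A nonzero exact residual keeps the noisy residual above \<open>\<tau>\<delta>\<^sub>l\<close>, so the method does not stop at
    step \<open>n\<close> for late \<open>l\<close>.\<close>
  then have pos: "norm (r_e n) / 2 > 0" by simp
  have "\<forall>\<^sub>F l in after n. \<tau> * ds l < norm (r_e n) / 2"
    using order_tendstoD(2)[OF tendsto_mult_right_zero[OF ds_tendsto_after, of \<tau>] pos] by simp
  moreover have "\<forall>\<^sub>F l in after n. norm (r_e n) / 2 < norm (r_d n l)"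
    using order_tendstoD(1)[OF tendsto_norm[OF res_d_tendsto], of "norm (r_e n) / 2"] pos by simp
  ultimately have "\<forall>\<^sub>F l in after n. \<tau> * ds l < norm (r_d n l)"
    by eventually_elim simp
  then show ?thesis
    unfolding eventually_after_iff
  proof (rule eventually_mono, intro impI)
    fix l assume "n \<le> nd l \<longrightarrow> \<tau> * ds l < norm (r_d n l)" "nd l = n"
    then show "breg (xi_d n l) x_lim (x_d n l) < \<epsilon>"
      using stop_props(1)[OF ds_pos yds_close, of l] unfolding nd_def by simp
  qed
qed

lemma noisy_breg_tendsto_0: "(\<lambda>l. breg (xi_d (nd l) l) x_lim (x_d (nd l) l)) \<longlonglongrightarrow> 0"
proof (rule order_tendstoI)
  have dom: "x_lim \<in> effdom R" using exact_data_convergence by blast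
  show "\<forall>\<^sub>F l in sequentially. a < breg (xi_d (nd l) l) x_lim (x_d (nd l) l)" if "a < 0" for a
    using breg_primal_nonneg[OF dom] that by (intro always_eventually allI) (rule less_le_trans)
  fix \<epsilon> :: real assume "0 < \<epsilon>"
  then have "\<forall>\<^sub>F n in sequentially. breg (xi_e n) x_lim (x_e n) < \<epsilon>"
    using order_tendstoD(2)[OF conjunct2[OF exact_data_convergence]] by blast
  then obtain N where N: "breg (xi_e N) x_lim (x_e N) < \<epsilon>"
    unfolding eventually_sequentially by blast
  text \<open>Up to step \<open>N\<close> use stability; beyond it, monotonicity of the noisy Bregman distances.\<close>
  have "\<forall>\<^sub>F l in after N. breg (xi_d N l) x_lim (x_d N l) < \<epsilon>"
    using order_tendstoD(2)[OF breg_d_tendsto[OF dom] N] .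
  moreover have "\<forall>\<^sub>F l in sequentially. \<forall>n\<in>{..<N}. nd l = n \<longrightarrow> breg (xi_d n l) x_lim (x_d n l) < \<epsilon>"
    using eventually_stop_eq_imp_breg_small[OF \<open>0 < \<epsilon>\<close>] by (intro eventually_ball_finite) auto
  ultimately show "\<forall>\<^sub>F l in sequentially. breg (xi_d (nd l) l) x_lim (x_d (nd l) l) < \<epsilon>"
    unfolding eventually_after_iff
  proof eventually_elim
    case (elim l)
    show ?case
    proof (cases "N \<le> nd l")
      case True
      have "breg (xi_d (nd l) l) x_lim (x_d (nd l) l) \<le> breg (xi_d N l) x_lim (x_d N l)"
        using breg_antimono[OF yds_close stop_props(2)[OF ds_pos yds_close] x_lim_in_B dom F_x_lim True]
        unfolding nd_def by simp
      then show ?thesis using elim True by linarith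
    qed (use elim in auto)
  qed
qed

lemma noisy_norm_tendsto_0: "(\<lambda>l. norm (x_d (nd l) l - x_lim)) \<longlonglongrightarrow> 0"
proof -
  have dom: "x_lim \<in> effdom R" using exact_data_convergence by blast
  have "(norm (x_d (nd l) l - x_lim))\<^sup>2 \<le> breg (xi_d (nd l) l) x_lim (x_d (nd l) l) / \<sigma>" for l
    using breg_ge_norm_sq[OF dual_subdiff dom] sigma_pos by (simp add: field_simps norm_minus_commute)
  then have le: "\<forall>l. norm (norm (x_d (nd l) l - x_lim)) \<le> sqrt (breg (xi_d (nd l) l) x_lim (x_d (nd l) l) / \<sigma>)"
    by (simp add: real_le_rsqrt)
  have "(\<lambda>l. sqrt (breg (xi_d (nd l) l) x_lim (x_d (nd l) l) / \<sigma>)) \<longlonglongrightarrow> sqrt (0 / \<sigma>)"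
    by (intro tendsto_intros noisy_breg_tendsto_0) (use sigma_pos in simp)
  then have "(\<lambda>l. sqrt (breg (xi_d (nd l) l) x_lim (x_d (nd l) l) / \<sigma>)) \<longlonglongrightarrow> 0" by simp
  with le show ?thesis by (rule Lim_null_comparison[OF always_eventually])
qed

end

section \<open>Convergence\<close>

context momentum_landweber
begin

lemma noisy_convergence:
  assumes "\<forall>l. \<delta>s l > 0" "\<delta>s \<longlonglongrightarrow> 0" "\<forall>l. norm (yds l - y) \<le> \<delta>s l"
  shows "let nd = (\<lambda>l. stop_index R F L Lc \<eta> \<sigma> \<beta> \<mu>0 \<mu>1 adaptive \<xi>0 \<tau> (\<delta>s l) (yds l)) in
      (\<lambda>l. bregman R (iter_xi R F L Lc \<eta> \<sigma> \<beta> \<mu>0 \<mu>1 adaptive False \<xi>0 (\<delta>s l) (yds l) (nd l)) x_lim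
        (iter_x R F L Lc \<eta> \<sigma> \<beta> \<mu>0 \<mu>1 adaptive False \<xi>0 (\<delta>s l) (yds l) (nd l))) \<longlonglongrightarrow> 0
      \<and> (\<lambda>l. norm (iter_x R F L Lc \<eta> \<sigma> \<beta> \<mu>0 \<mu>1 adaptive False \<xi>0 (\<delta>s l) (yds l) (nd l) - x_lim))
          \<longlonglongrightarrow> 0"
proof -
  interpret noisy_data_sequence R \<sigma> x0 \<xi>0 F L \<rho> \<eta> Lc y xb \<beta> \<mu>0 \<mu>1 \<tau> adaptive \<delta>s yds
    using assms by unfold_locales auto
  have "x_lim \<in> effdom R" using exact_data_convergence by blast
  then have "bregman R (xi_d n l) x_lim (x_d n l) = ereal (breg (xi_d n l) x_lim (x_d n l))" for n l
    using bregman_eq_breg[OF _ primal_in_effdom] by blast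
  then show ?thesis
    using noisy_breg_tendsto_0[THEN tendsto_ereal] noisy_norm_tendsto_0
    unfolding iter_x_eq_primal iter_xi_eq_dual stop_index_eq_stop nd_def Let_def zero_ereal_def
    by simp
qed

lemma dual_e_orthogonal:
  assumes ker: "\<And>x. x \<in> B \<Longrightarrow> L x' w = 0 \<Longrightarrow> L x w = 0" and w: "L x' w = 0"
  shows "(xi_e n - \<xi>0) \<bullet> w = 0 \<and> m_e n \<bullet> w = 0"
proof (induction n)
  case (Suc n)
  have "g_e n \<bullet> w = L (x_e n) w \<bullet> r_e n"
    unfolding grd_def by (simp add: inner_adjoint_blinfun[symmetric] inner_commute)
  then have "g_e n \<bullet> w = 0" using ker[OF x_e_in_B w] by simp
  then have "m_e (Suc n) \<bullet> w = 0" using Suc unfolding incr_Suc by (simp add: inner_diff_left)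
  moreover have "xi_e (Suc n) - \<xi>0 = (xi_e n - \<xi>0) + m_e (Suc n)" unfolding incr_Suc_eq_diff by simp
  ultimately show ?case using Suc by (simp add: inner_add_left inner_diff_left)
qed (simp add: state_0 incr_0)

lemma x_lim_eq_xdag:
  assumes "B \<subseteq> domF"
    and ker: "\<forall>x\<in>B. {v. L (xdag R F domF y \<xi>0 x0) v = 0} \<subseteq> {v. L x v = 0}"
  shows "x_lim = xdag R F domF y \<xi>0 x0"
proof -
  obtain xd where xd: "xd \<in> B" "xd \<in> effdom R" "F xd = y"
    and min: "\<And>z. z \<in> effdom R \<Longrightarrow> F z = y \<Longrightarrow> breg \<xi>0 xd x0 \<le> breg \<xi>0 z x0"
    and unique: "\<And>z. z \<in> effdom R \<Longrightarrow> F z = y \<Longrightarrow> breg \<xi>0 z x0 \<le> breg \<xi>0 xd x0 \<Longrightarrow> z = xd"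
    using solution_breg_minimizer by blast
  have xdag: "xdag R F domF y \<xi>0 x0 = xd" using xdag_eqI[OF assms(1) xd min unique] .
  have dom: "x_lim \<in> effdom R" using exact_data_convergence by blast
  have "L xd (x_lim - xd) = 0" using norm_L_le_F_diff[OF x_lim_in_B xd(1)] F_x_lim xd(3) by simp
  then have "(xi_e n - \<xi>0) \<bullet> (x_lim - xd) = 0" for n
    using dual_e_orthogonal[of xd] ker unfolding xdag by blast
  text \<open>Hence the Bregman distances to \<open>x_lim\<close> and to \<open>x\<^sup>\<dagger>\<close> along the iterates differ by a constant.\<close>
  then have shift: "breg \<xi>0 x_lim x0 - breg \<xi>0 xd x0 = breg (xi_e n) x_lim (x_e n) - breg (xi_e n) xd (x_e n)"
    for n unfolding breg_def by (simp add: inner_diff_left inner_diff_right algebra_simps)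
  have "breg \<xi>0 x_lim x0 - breg \<xi>0 xd x0 \<le> breg (xi_e n) x_lim (x_e n)" for n
    using shift[of n] breg_primal_nonneg[OF xd(2), of True 0 y n] by linarith
  then have "breg \<xi>0 x_lim x0 - breg \<xi>0 xd x0 \<le> 0"
    using LIMSEQ_le_const[OF conjunct2[OF exact_data_convergence]] by blast
  then show ?thesis using unique[OF dom F_x_lim] xdag by simp
qed

end

theorem mainTheorem9:
  fixes R :: "'a::{real_inner,complete_space} \<Rightarrow> ereal"
    and F :: "'a \<Rightarrow> 'b::{real_inner,complete_space}"
    and domF :: "'a set"
    and L :: "'a \<Rightarrow> ('a \<Rightarrow>\<^sub>L 'b)"
    and \<sigma> \<rho> \<eta> Lc \<tau> \<beta> \<mu>0 \<mu>1 :: real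
    and x0 \<xi>0 :: 'a and y :: 'b and adaptive :: bool
  assumes R_proper: "proper_fun R" and R_lsc: "lsc_fun R"
    and sigma_pos: "\<sigma> > 0" and R_sc: "strongly_convex R \<sigma>"
    and rho_pos: "\<rho> > 0" and xi0: "\<xi>0 \<in> subdiff R x0"
    and ball_dom: "cball x0 (2 * \<rho>) \<subseteq> domF"
    and sol: "\<exists>xb\<in>domF. F xb = y \<and> bregman R \<xi>0 xb x0 \<le> ereal (\<sigma> * \<rho>\<^sup>2)"
    and weak_closed: "\<And>xs x v. (\<forall>n. xs n \<in> domF) \<Longrightarrow> weak_conv xs x \<Longrightarrow>
                        (\<lambda>n. F (xs n)) \<longlonglongrightarrow> v \<Longrightarrow> x \<in> domF \<and> F x = v"
    and L_cont: "continuous_on (cball x0 (2 * \<rho>)) L"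
    and eta: "0 \<le> \<eta>" "\<eta> < 1"
    and tangential: "\<And>x xb. x \<in> cball x0 (2 * \<rho>) \<Longrightarrow> xb \<in> cball x0 (2 * \<rho>) \<Longrightarrow>
           norm (F x - F xb - L xb (x - xb)) \<le> \<eta> * norm (F x - F xb)"
    and Lc_pos: "Lc > 0" and L_bound: "\<And>x. x \<in> cball x0 (2 * \<rho>) \<Longrightarrow> norm (L x) \<le> Lc"
    and beta: "0 \<le> \<beta>" "\<beta> < 1"
    and tau: "\<tau> > 1" and mu0: "\<mu>0 > 0" and mu1: "\<mu>1 > 0"
    and param: "1 - (1 + \<eta>) / \<tau> - \<eta> - \<mu>0 / (4 * \<sigma>) > 0"
  shows "\<exists>xs. xs \<in> domF \<and> F xs = y \<and> xs \<in> cball x0 (2 * \<rho>) \<and> xs \<in> effdom R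
    \<and> (\<lambda>n. iter_x R F L Lc \<eta> \<sigma> \<beta> \<mu>0 \<mu>1 adaptive True \<xi>0 0 y n) \<longlonglongrightarrow> xs
    \<and> (\<forall>\<delta>s :: nat \<Rightarrow> real. \<forall>yds :: nat \<Rightarrow> 'b.
         (\<forall>l. \<delta>s l > 0) \<longrightarrow> \<delta>s \<longlonglongrightarrow> 0 \<longrightarrow> (\<forall>l. norm (yds l - y) \<le> \<delta>s l) \<longrightarrow>
         (let nd = (\<lambda>l. stop_index R F L Lc \<eta> \<sigma> \<beta> \<mu>0 \<mu>1 adaptive \<xi>0 \<tau> (\<delta>s l) (yds l)) in
           (\<lambda>l. bregman R (iter_xi R F L Lc \<eta> \<sigma> \<beta> \<mu>0 \<mu>1 adaptive False \<xi>0 (\<delta>s l) (yds l) (nd l)) xs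
                     (iter_x R F L Lc \<eta> \<sigma> \<beta> \<mu>0 \<mu>1 adaptive False \<xi>0 (\<delta>s l) (yds l) (nd l)))
             \<longlonglongrightarrow> 0
         \<and> (\<lambda>l. norm (iter_x R F L Lc \<eta> \<sigma> \<beta> \<mu>0 \<mu>1 adaptive False \<xi>0 (\<delta>s l) (yds l) (nd l) - xs))
             \<longlonglongrightarrow> 0))
    \<and> ((\<forall>x\<in>cball x0 (2 * \<rho>). {v. L (xdag R F domF y \<xi>0 x0) v = 0} \<subseteq> {v. L x v = 0})
         \<longrightarrow> xs = xdag R F domF y \<xi>0 x0)"
proof -
  interpret strongly_convex_setting R \<sigma> x0 \<xi>0
    using R_proper R_lsc sigma_pos R_sc xi0 by unfold_locales
  obtain xb where xb: "F xb = y" "bregman R \<xi>0 xb x0 \<le> ereal (\<sigma> * \<rho>\<^sup>2)" using sol by blast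
  have x0_dom: "x0 \<in> effdom R" using xi0 subdiff_iff by blast
  then have xb_dom: "xb \<in> effdom R" using xb(2) bregman_notin_effdom by force
  interpret momentum_landweber R \<sigma> x0 \<xi>0 F L \<rho> \<eta> Lc y xb \<beta> \<mu>0 \<mu>1 \<tau> adaptive
    using rho_pos L_cont eta tangential Lc_pos L_bound xb_dom xb bregman_eq_breg[OF xb_dom x0_dom]
      beta tau mu0 mu1 param by unfold_locales auto
  show ?thesis
  proof (intro exI[of _ x_lim] conjI allI impI)
    show "(\<lambda>n. iter_x R F L Lc \<eta> \<sigma> \<beta> \<mu>0 \<mu>1 adaptive True \<xi>0 0 y n) \<longlonglongrightarrow> x_lim"
      unfolding iter_x_eq_primal by (rule x_e_tendsto)
  qed (use ball_dom x_lim_in_B F_x_lim exact_data_convergence noisy_convergence x_lim_eq_xdag[OF ball_dom]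
      in auto)
qed

end
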